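(* Let $P$ be a program, $SQ$ a stack-queue scheduling rule and $G$ a p-goal. If there is a finite p-RSLD derivation $G\xrightarrow{SQ,X.P}>>Q$ of $G$ in $P$ via $SQ$ with template $X$ and final reduced resolvent $Q$, then there exist a template $Z$ and a p-SLD derivation $G\xrightarrow{SQ,Z.P}R$ with $X\subseteq_L Z$ and $\#Q\le\#R$.
   Context: A p-atom is a pair $a[p]$ of an atom $a$ and a rational priority $p$. A p-goal is a finite set of p-atoms with pairwise distinct priorities, regarded as a list ordered by increasing priority; $\#G$ is its number of p-atoms. Substitutions act on atoms and leave priorities unchanged. A clause is $h\leftarrow B$ with $h$ an atom and $B$ a p-goal; a program is a finite set of clauses. For p-goals with no common priority, $F+G=F\cup G$; $F|G$ denotes $F+G$ when all priorities of $F$ are smaller than those of $G$. A shifting $\underline{\pi}$ is a strictly increasing bijection $\mathbb{Q}\to\mathbb{Q}$ acting on priorities. Priority derivation step: for a p-goal $a|F$ ($a$ of least priority), clause $c=(h\leftarrow B)$, renaming $\xi$ with $var(a|F)\cap var(c\xi)=\emptyset$, idempotent relevant mgu $\theta$ of $a$ and $h\xi$, shifting $\underline{\pi}$ with $F$, $B\xi\underline{\pi}$ sharing no priority: $a|F\xrightarrow{c\xi,\theta}(F+B\xi\underline{\pi})\theta$. A p-SLD derivation is a sequence of such steps with each renamed clause $c_j\xi_j$ variable-disjoint from the initial goal and all earlier renamed clauses; its template is the sequence of applied clauses. For templates, $X\subseteq_L Y$ means $X$ is a subsequence of $Y$. $G\xrightarrow{S,M.P}R$ denotes a p-SLD derivation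 with template $M$, clauses in $P$, steps in $S$. Lowering: for $c=(h\leftarrow B)$, a step $a\lambda\underline{\sigma}|(K\lambda\underline{\sigma}+X)\xrightarrow{c}(X+K\lambda\underline{\sigma}+B\xi''\underline{\theta}'')\alpha''$ is a lowering by $X$ of $a|K\xrightarrow{c}(K+B\xi'\underline{\theta}')\alpha'$; a congruent lowering if some shifting $\underline{\rho}$ has $K\underline{\rho}=K\underline{\sigma}$ and $B\underline{\theta}'\underline{\rho}=B\underline{\theta}''$. Steps are congruent lowerings of each other if each is a congruent lowering of the other. A set $S$ of steps is complete if (i) whenever some step $G\xrightarrow{c}\cdot$ exists, some step $G\xrightarrow{c}\cdot$ lies in $S$, and (ii) $S$ contains every step that is a congruent lowering of each other with a step of $S$. Stack-queue scheduling rule: a complete set $SQ$ of steps such that for every clause $c=(h\leftarrow B)$ there are p-goals $M_s,M_q$ with $B=M_s|M_q$ such that every step $a|K\xrightarrow{c\xi,\mu}R$ in $SQ$ satisfies $R=(M_s\xi\underline{\gamma}|K|M_q\xi\underline{\gamma})\mu$ for some shifting $\underline{\gamma}$. Priority reduced goal: for a set of variables $X$, substitution $\tau$ and p-goal $G$, $N$ is a reduced p-goal of $G$ by $\tau$ up to $X$, written $G>>^{\tau}N$, if (i) $G=F+\{a_1[p_1],\dots,a_h[p_h]\}+A_1+\dots+A_h$ where $F,A_1,\dots,A_h$ are p-goals and $b\tau=a_j$ for every $b[s]\in A_j$; (ii) $N=F+\{a_1[r_1],\dots,a_h[r_h]\}$ with $r_j=\min(\{p_j\}\cup\{\text{priorities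 of }A_j\})$; (iii) $x\tau=x$ for all $x\in X\cup var(N)$. p-RSLD derivation of $G_0$ in $P$: a sequence $G_0>>^{\alpha_0}N_0\xrightarrow{c_0\xi_0,\theta_0}G_1>>^{\alpha_1}N_1\xrightarrow{c_1\xi_1,\theta_1}\cdots$ where each $N_j\xrightarrow{c_j\xi_j,\theta_j}G_{j+1}$ is a priority derivation step with $c_j\in P$ and $var(c_j\xi_j)\cap(var(G_0)\cup var(c_0\xi_0)\cup\dots\cup var(c_{j-1}\xi_{j-1}))=\emptyset$, and $G_j>>^{\alpha_j}N_j$ up to $var(G_0\theta_0\cdots\theta_{j-1})$. It is via $S$ if all its derivation steps belong to $S$; $G\xrightarrow{S,D.P}>>N$ denotes a finite such derivation with template $D$ whose last element is the reduced resolvent $N$. *)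

theory Defs
  imports Complex_Main "HOL-Library.Sublist"
begin

datatype (funs_trm: 'f, vars_trm: 'v) trm = Var 'v | Fn 'f "('f,'v) trm list"

datatype ('f,'v) atom = Atom 'f "('f,'v) trm list"

type_synonym ('f,'v) subst = "'v \<Rightarrow> ('f,'v) trm"

fun subst_trm :: "('f,'v) subst \<Rightarrow> ('f,'v) trm \<Rightarrow> ('f,'v) trm" where
  "subst_trm \<sigma> (Var x) = \<sigma> x"
| "subst_trm \<sigma> (Fn f ts) = Fn f (map (subst_trm \<sigma>) ts)"

fun subst_atom :: "('f,'v) subst \<Rightarrow> ('f,'v) atom \<Rightarrow> ('f,'v) atom" where
  "subst_atom \<sigma> (Atom p ts) = Atom p (map (subst_trm \<sigma>) ts)"

fun vars_atom :: "('f,'v) atom \<Rightarrow> 'v set" where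
  "vars_atom (Atom p ts) = (\<Union>t\<in>set ts. vars_trm t)"

definition renaming :: "('f,'v) subst \<Rightarrow> bool" where
  "renaming \<xi> \<longleftrightarrow> (\<exists>\<pi>. bij \<pi> \<and> \<xi> = (\<lambda>x. Var (\<pi> x)))"

definition unifier :: "('f,'v) subst \<Rightarrow> ('f,'v) atom \<Rightarrow> ('f,'v) atom \<Rightarrow> bool" where
  "unifier \<theta> a b \<longleftrightarrow> subst_atom \<theta> a = subst_atom \<theta> b"

definition is_mgu :: "('f,'v) subst \<Rightarrow> ('f,'v) atom \<Rightarrow> ('f,'v) atom \<Rightarrow> bool" where
  "is_mgu \<theta> a b \<longleftrightarrow> unifier \<theta> a b \<and>
     (\<forall>\<sigma>. unifier \<sigma> a b \<longrightarrow> (\<exists>\<delta>. \<forall>x. \<sigma> x = subst_trm \<delta> (\<theta> x)))"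

definition idempotent :: "('f,'v) subst \<Rightarrow> bool" where
  "idempotent \<theta> \<longleftrightarrow> (\<forall>x. subst_trm \<theta> (\<theta> x) = \<theta> x)"

definition subst_vars :: "('f,'v) subst \<Rightarrow> 'v set" where
  "subst_vars \<theta> = {x. \<theta> x \<noteq> Var x} \<union> (\<Union>x\<in>{x. \<theta> x \<noteq> Var x}. vars_trm (\<theta> x))"

definition relevant :: "('f,'v) subst \<Rightarrow> ('f,'v) atom \<Rightarrow> ('f,'v) atom \<Rightarrow> bool" where
  "relevant \<theta> a b \<longleftrightarrow> subst_vars \<theta> \<subseteq> vars_atom a \<union> vars_atom b"

type_synonym ('f,'v) pgoal = "(('f,'v) atom \<times> rat) set"
type_synonym ('f,'v) clause = "('f,'v) atom \<times> ('f,'v) pgoal"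

definition prios :: "('f,'v) pgoal \<Rightarrow> rat set" where
  "prios G = snd ` G"

definition pgoal :: "('f,'v) pgoal \<Rightarrow> bool" where
  "pgoal G \<longleftrightarrow> finite G \<and> inj_on snd G"

definition subst_pg :: "('f,'v) subst \<Rightarrow> ('f,'v) pgoal \<Rightarrow> ('f,'v) pgoal" where
  "subst_pg \<sigma> G = (\<lambda>(a,p). (subst_atom \<sigma> a, p)) ` G"

definition shift_pg :: "(rat \<Rightarrow> rat) \<Rightarrow> ('f,'v) pgoal \<Rightarrow> ('f,'v) pgoal" where
  "shift_pg \<pi> G = (\<lambda>(a,p). (a, \<pi> p)) ` G"

definition vars_pg :: "('f,'v) pgoal \<Rightarrow> 'v set" where
  "vars_pg G = (\<Union>ap\<in>G. vars_atom (fst ap))"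

definition shifting :: "(rat \<Rightarrow> rat) \<Rightarrow> bool" where
  "shifting \<pi> \<longleftrightarrow> strict_mono \<pi> \<and> bij \<pi>"

text \<open>all priorities of A are smaller than those of B (the side condition of A|B)\<close>
definition below :: "('f,'v) pgoal \<Rightarrow> ('f,'v) pgoal \<Rightarrow> bool" where
  "below A B \<longleftrightarrow> (\<forall>p\<in>prios A. \<forall>q\<in>prios B. p < q)"

definition valid_clause :: "('f,'v) clause \<Rightarrow> bool" where
  "valid_clause c \<longleftrightarrow> pgoal (snd c)"

definition program :: "('f,'v) clause set \<Rightarrow> bool" where
  "program P \<longleftrightarrow> finite P \<and> (\<forall>c\<in>P. valid_clause c)"

definition subst_clause :: "('f,'v) subst \<Rightarrow> ('f,'v) clause \<Rightarrow> ('f,'v) clause" where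
  "subst_clause \<xi> c = (subst_atom \<xi> (fst c), subst_pg \<xi> (snd c))"

definition vars_clause :: "('f,'v) clause \<Rightarrow> 'v set" where
  "vars_clause c = vars_atom (fst c) \<union> vars_pg (snd c)"

text \<open>G = a[p] | K, i.e. a[p] is the p-atom of least priority of G and K the rest.\<close>
definition first_split :: "('f,'v) pgoal \<Rightarrow> ('f,'v) atom \<Rightarrow> rat \<Rightarrow> ('f,'v) pgoal \<Rightarrow> bool" where
  "first_split G a p K \<longleftrightarrow> G = insert (a,p) K \<and> (a,p) \<notin> K \<and> (\<forall>q\<in>prios K. p < q)"

text \<open>pstep G c xi theta pi R: the priority derivation step
  G = a|F --c xi, theta--> (F + B xi pi) theta, using shifting pi.\<close>
definition pstep :: "('f,'v) pgoal \<Rightarrow> ('f,'v) clause \<Rightarrow> ('f,'v) subst \<Rightarrow> ('f,'v) subst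
     \<Rightarrow> (rat \<Rightarrow> rat) \<Rightarrow> ('f,'v) pgoal \<Rightarrow> bool" where
  "pstep G c \<xi> \<theta> \<pi> R \<longleftrightarrow> pgoal G \<and> valid_clause c \<and>
     (\<exists>a p F. first_split G a p F \<and> renaming \<xi> \<and>
        vars_pg G \<inter> vars_clause (subst_clause \<xi> c) = {} \<and>
        is_mgu \<theta> a (subst_atom \<xi> (fst c)) \<and> idempotent \<theta> \<and>
        relevant \<theta> a (subst_atom \<xi> (fst c)) \<and>
        shifting \<pi> \<and> prios F \<inter> prios (shift_pg \<pi> (subst_pg \<xi> (snd c))) = {} \<and>
        R = subst_pg \<theta> (F \<union> shift_pg \<pi> (subst_pg \<xi> (snd c))))"

type_synonym ('f,'v) step =
  "('f,'v) pgoal \<times> ('f,'v) clause \<times> ('f,'v) subst \<times> ('f,'v) subst \<times> ('f,'v) pgoal"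

fun is_step :: "('f,'v) step \<Rightarrow> bool" where
  "is_step (G, c, \<xi>, \<theta>, R) \<longleftrightarrow> (\<exists>\<pi>. pstep G c \<xi> \<theta> \<pi> R)"

fun cong_lowering :: "('f,'v) step \<Rightarrow> ('f,'v) step \<Rightarrow> bool" where
  "cong_lowering (G2, c2, \<xi>2, \<alpha>2, R2) (G1, c1, \<xi>1, \<alpha>1, R1) \<longleftrightarrow> c1 = c2 \<and>
     (\<exists>a p K lam \<sigma> X \<pi>1 \<pi>2 \<rho>.
        first_split G1 a p K \<and>
        shifting \<sigma> \<and> pgoal X \<and> prios X \<inter> prios (shift_pg \<sigma> (subst_pg lam K)) = {} \<and>
        (\<forall>q\<in>prios X. \<sigma> p < q) \<and>
        G2 = insert (subst_atom lam a, \<sigma> p) (shift_pg \<sigma> (subst_pg lam K) \<union> X) \<and>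
        pstep G1 c1 \<xi>1 \<alpha>1 \<pi>1 R1 \<and> pstep G2 c2 \<xi>2 \<alpha>2 \<pi>2 R2 \<and>
        shifting \<rho> \<and> shift_pg \<rho> K = shift_pg \<sigma> K \<and>
        shift_pg \<rho> (shift_pg \<pi>1 (snd c1)) = shift_pg \<pi>2 (snd c1))"

definition complete_steps :: "('f,'v) step set \<Rightarrow> bool" where
  "complete_steps S \<longleftrightarrow> (\<forall>s\<in>S. is_step s) \<and>
     (\<forall>G c. (\<exists>\<xi> \<theta> R. is_step (G, c, \<xi>, \<theta>, R)) \<longrightarrow> (\<exists>\<xi> \<theta> R. (G, c, \<xi>, \<theta>, R) \<in> S)) \<and>
     (\<forall>s\<in>S. \<forall>s'. cong_lowering s s' \<and> cong_lowering s' s \<longrightarrow> s' \<in> S)"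

definition stack_queue :: "('f,'v) step set \<Rightarrow> bool" where
  "stack_queue SQ \<longleftrightarrow> complete_steps SQ \<and>
     (\<forall>h B. valid_clause (h, B) \<longrightarrow>
        (\<exists>Ms Mq. pgoal Ms \<and> pgoal Mq \<and> below Ms Mq \<and> B = Ms \<union> Mq \<and>
           (\<forall>G \<xi> \<mu> R. (G, (h, B), \<xi>, \<mu>, R) \<in> SQ \<longrightarrow>
              (\<forall>a p K. first_split G a p K \<longrightarrow>
                 (\<exists>\<gamma>. shifting \<gamma> \<and>
                    below (shift_pg \<gamma> (subst_pg \<xi> Ms)) K \<and>
                    below K (shift_pg \<gamma> (subst_pg \<xi> Mq)) \<and>
                    below (shift_pg \<gamma> (subst_pg \<xi> Ms)) (shift_pg \<gamma> (subst_pg \<xi> Mq)) \<and>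
                    R = subst_pg \<mu> (shift_pg \<gamma> (subst_pg \<xi> Ms) \<union> K \<union>
                                     shift_pg \<gamma> (subst_pg \<xi> Mq)))))))"

text \<open>reduced X tau G N : G >>^tau N up to X\<close>
definition reduced :: "'v set \<Rightarrow> ('f,'v) subst \<Rightarrow> ('f,'v) pgoal \<Rightarrow> ('f,'v) pgoal \<Rightarrow> bool" where
  "reduced X \<tau> G N \<longleftrightarrow> pgoal G \<and>
     (\<exists>F (h::nat) a p A.
        pgoal F \<and> (\<forall>j<h. pgoal (A j)) \<and> inj_on p {..<h} \<and>
        prios F \<inter> p ` {..<h} = {} \<and>
        (\<forall>j<h. prios F \<inter> prios (A j) = {}) \<and>
        (\<forall>j<h. \<forall>k<h. p j \<notin> prios (A k)) \<and>
        (\<forall>j<h. \<forall>k<h. j \<noteq> k \<longrightarrow> prios (A j) \<inter> prios (A k) = {}) \<and>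
        G = F \<union> (\<lambda>j. (a j, p j)) ` {..<h} \<union> (\<Union>j<h. A j) \<and>
        (\<forall>j<h. \<forall>bs\<in>A j. subst_atom \<tau> (fst bs) = a j) \<and>
        N = F \<union> (\<lambda>j. (a j, Min (insert (p j) (prios (A j))))) ` {..<h} \<and>
        (\<forall>x\<in>X \<union> vars_pg N. \<tau> x = Var x))"

definition apply_substs :: "('f,'v) pgoal \<Rightarrow> ('f,'v) subst list \<Rightarrow> ('f,'v) pgoal" where
  "apply_substs G ths = foldl (\<lambda>H \<theta>. subst_pg \<theta> H) G ths"

definition sld_deriv :: "('f,'v) step set \<Rightarrow> ('f,'v) clause set \<Rightarrow> ('f,'v) pgoal
     \<Rightarrow> ('f,'v) clause list \<Rightarrow> ('f,'v) pgoal \<Rightarrow> bool" where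
  "sld_deriv S P G0 Z R \<longleftrightarrow>
     (\<exists>(m::nat) G cs \<xi>s \<theta>s. G 0 = G0 \<and> G m = R \<and> Z = map cs [0..<m] \<and>
        (\<forall>j<m. cs j \<in> P \<and> is_step (G j, cs j, \<xi>s j, \<theta>s j, G (Suc j)) \<and>
               (G j, cs j, \<xi>s j, \<theta>s j, G (Suc j)) \<in> S \<and>
               vars_clause (subst_clause (\<xi>s j) (cs j)) \<inter>
                 (vars_pg G0 \<union> (\<Union>i<j. vars_clause (subst_clause (\<xi>s i) (cs i)))) = {}))"

definition rsld_deriv :: "('f,'v) step set \<Rightarrow> ('f,'v) clause set \<Rightarrow> ('f,'v) pgoal
     \<Rightarrow> ('f,'v) clause list \<Rightarrow> ('f,'v) pgoal \<Rightarrow> bool" where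
  "rsld_deriv S P G0 D Q \<longleftrightarrow>
     (\<exists>(n::nat) G N \<alpha> cs \<xi>s \<theta>s. G 0 = G0 \<and> N n = Q \<and> D = map cs [0..<n] \<and>
        (\<forall>j\<le>n. reduced (vars_pg (apply_substs G0 (map \<theta>s [0..<j]))) (\<alpha> j) (G j) (N j)) \<and>
        (\<forall>j<n. cs j \<in> P \<and> is_step (N j, cs j, \<xi>s j, \<theta>s j, G (Suc j)) \<and>
               (N j, cs j, \<xi>s j, \<theta>s j, G (Suc j)) \<in> S \<and>
               vars_clause (subst_clause (\<xi>s j) (cs j)) \<inter>
                 (vars_pg G0 \<union> (\<Union>i<j. vars_clause (subst_clause (\<xi>s i) (cs i)))) = {}))"

end

theory Submission
  imports Defs
begin

text \<open>Along the given p-RSLD derivation we build a p-SLD derivation, with the same stack-queue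
  rule, whose goals simulate the reduced goals: every atom of the reduced goal \<open>N\<close> is an
  instance of an atom of the simulating goal \<open>H\<close>, at a priority given by an order embedding of
  the priorities of \<open>N\<close> into those of \<open>H\<close>. The other atoms of \<open>H\<close> are the copies that
  reduction merged away. Such an extra atom is covered: it can be resolved by stack-queue steps
  until only atoms remain that occur earlier in the goal. Before the p-RSLD step on the atom of
  least priority is simulated, the extra atoms in front of its counterpart are cleared along
  their coverings (a recursion on the covering, which works because the stack part of a body is
  placed in front of the remaining goal); then the step is lifted to \<open>H\<close>. The p-RSLD template
  thus embeds into the p-SLD template, and the embedding of atoms gives \<open>#Q \<le> #R\<close>.\<close>

section \<open>Substitutions\<close>

lemma subst_trm_comp: "subst_trm \<sigma> (subst_trm \<theta> t) = subst_trm (\<lambda>x. subst_trm \<sigma> (\<theta> x)) t"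
  by (induction t) auto

lemma subst_trm_cong: "(\<And>x. x \<in> vars_trm t \<Longrightarrow> \<sigma> x = \<tau> x) \<Longrightarrow> subst_trm \<sigma> t = subst_trm \<tau> t"
  by (induction t) auto

lemma subst_trm_Var [simp]: "subst_trm Var t = t"
  by (induction t) (auto simp: map_idI)

lemma vars_subst_trm: "vars_trm (subst_trm \<sigma> t) = (\<Union>x\<in>vars_trm t. vars_trm (\<sigma> x))"
  by (induction t) auto

lemma subst_atom_comp: "subst_atom \<sigma> (subst_atom \<theta> a) = subst_atom (\<lambda>x. subst_trm \<sigma> (\<theta> x)) a"
  by (cases a) (auto simp: subst_trm_comp)

lemma subst_atom_cong: "(\<And>x. x \<in> vars_atom a \<Longrightarrow> \<sigma> x = \<tau> x) \<Longrightarrow> subst_atom \<sigma> a = subst_atom \<tau> a"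
  by (cases a) (auto intro!: subst_trm_cong)

lemma subst_atom_Var [simp]: "subst_atom Var a = a"
  by (cases a) (auto simp: map_idI)

lemma vars_subst_atom: "vars_atom (subst_atom \<sigma> a) = (\<Union>x\<in>vars_atom a. vars_trm (\<sigma> x))"
  by (cases a) (auto simp: vars_subst_trm)

lemma finite_vars_trm [simp]: "finite (vars_trm t)"
  by (induction t) auto

lemma finite_vars_atom [simp]: "finite (vars_atom a)"
  by (cases a) auto

lemma vars_subst_trm_subset: "vars_trm (subst_trm \<theta> t) \<subseteq> vars_trm t \<union> subst_vars \<theta>"
  unfolding vars_subst_trm subst_vars_def by (force split: if_splits)

lemma vars_subst_atom_subset: "vars_atom (subst_atom \<theta> a) \<subseteq> vars_atom a \<union> subst_vars \<theta>"
  by (cases a) (use vars_subst_trm_subset in fastforce)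

section \<open>Unification\<close>

lemma size_less_subst_trm:
  assumes "x \<in> vars_trm t" and "t \<noteq> Var x"
  shows "size (\<sigma> x) < size (subst_trm \<sigma> t)"
  using assms
proof (induction t)
  case (Fn f ts)
  then obtain u where u: "u \<in> set ts" "x \<in> vars_trm u" by auto
  have "size (\<sigma> x) \<le> size (subst_trm \<sigma> u)"
    using Fn.IH[OF u] by (cases "u = Var x") auto
  then have "size (\<sigma> x) \<le> size_list (size \<circ> subst_trm \<sigma>) ts"
    using u(1) by (intro size_list_estimation') auto
  then show ?case by simp
qed simp

type_synonym ('f,'v) eqs = "(('f,'v) trm \<times> ('f,'v) trm) list"

definition unifies :: "('f,'v) subst \<Rightarrow> ('f,'v) eqs \<Rightarrow> bool" where
  "unifies \<sigma> E \<longleftrightarrow> (\<forall>(s,t)\<in>set E. subst_trm \<sigma> s = subst_trm \<sigma> t)"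

definition vars_eqs :: "('f,'v) eqs \<Rightarrow> 'v set" where
  "vars_eqs E = (\<Union>(s,t)\<in>set E. vars_trm s \<union> vars_trm t)"

definition size_eqs :: "('f,'v) eqs \<Rightarrow> nat" where
  "size_eqs E = size_list (\<lambda>(s,t). size s + size t) E"

definition relevant_idem_mgu :: "('f,'v) subst \<Rightarrow> ('f,'v) eqs \<Rightarrow> bool" where
  "relevant_idem_mgu \<theta> E \<longleftrightarrow> unifies \<theta> E \<and>
     (\<forall>\<sigma>. unifies \<sigma> E \<longrightarrow> (\<exists>\<delta>. \<forall>x. \<sigma> x = subst_trm \<delta> (\<theta> x))) \<and>
     idempotent \<theta> \<and> subst_vars \<theta> \<subseteq> vars_eqs E"

lemma unifies_Cons [simp]: "unifies \<sigma> ((s,t) # E) \<longleftrightarrow> subst_trm \<sigma> s = subst_trm \<sigma> t \<and> unifies \<sigma> E"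
  unfolding unifies_def by auto

lemma vars_eqs_Cons [simp]: "vars_eqs ((s,t) # E) = vars_trm s \<union> vars_trm t \<union> vars_eqs E"
  unfolding vars_eqs_def by auto

lemma finite_vars_eqs [simp]: "finite (vars_eqs E)"
  unfolding vars_eqs_def by auto

lemma unifies_zip:
  "length ss = length ts \<Longrightarrow> unifies \<sigma> (zip ss ts @ E) \<longleftrightarrow> map (subst_trm \<sigma>) ss = map (subst_trm \<sigma>) ts \<and> unifies \<sigma> E"
  by (induction ss ts rule: list_induct2) auto

lemma vars_eqs_zip:
  "length ss = length ts \<Longrightarrow> vars_eqs (zip ss ts @ E) = (\<Union>s\<in>set ss. vars_trm s) \<union> (\<Union>t\<in>set ts. vars_trm t) \<union> vars_eqs E"
  by (induction ss ts rule: list_induct2) auto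

lemma size_eqs_zip:
  "length ss = length ts \<Longrightarrow> size_eqs (zip ss ts @ E) < size_eqs ((Fn f ss, Fn g ts) # E)"
  unfolding size_eqs_def by (induction ss ts rule: list_induct2) auto

lemma relevant_idem_mgu_Nil: "relevant_idem_mgu Var []"
  unfolding relevant_idem_mgu_def unifies_def idempotent_def subst_vars_def by auto

lemma relevant_idem_mgu_swap: "relevant_idem_mgu \<theta> ((s,t) # E) \<longleftrightarrow> relevant_idem_mgu \<theta> ((t,s) # E)"
  unfolding relevant_idem_mgu_def by auto

lemma relevant_idem_mgu_trivial: "relevant_idem_mgu \<theta> E \<Longrightarrow> relevant_idem_mgu \<theta> ((t,t) # E)"
  unfolding relevant_idem_mgu_def by auto

lemma relevant_idem_mgu_decompose:
  "length ss = length ts \<Longrightarrow> relevant_idem_mgu \<theta> (zip ss ts @ E) \<Longrightarrow>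
   relevant_idem_mgu \<theta> ((Fn f ss, Fn f ts) # E)"
  unfolding relevant_idem_mgu_def by (simp add: unifies_zip vars_eqs_zip)

definition subst_eqs :: "('f,'v) subst \<Rightarrow> ('f,'v) eqs \<Rightarrow> ('f,'v) eqs" where
  "subst_eqs \<sigma> E = map (map_prod (subst_trm \<sigma>) (subst_trm \<sigma>)) E"

lemma unifies_subst_eqs: "unifies \<sigma> (subst_eqs \<rho> E) \<longleftrightarrow> unifies (\<lambda>x. subst_trm \<sigma> (\<rho> x)) E"
  unfolding unifies_def subst_eqs_def by (simp add: subst_trm_comp case_prod_beta)

lemma vars_eqs_subst_eqs: "vars_eqs (subst_eqs \<rho> E) = (\<Union>x\<in>vars_eqs E. vars_trm (\<rho> x))"
  unfolding vars_eqs_def subst_eqs_def by (auto simp: vars_subst_trm case_prod_beta)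

lemma vars_eqs_eliminate:
  assumes "x \<notin> vars_trm u"
  shows "vars_eqs (subst_eqs (Var(x := u)) E) \<subseteq> vars_trm u \<union> vars_eqs E - {x}"
  using assms unfolding vars_eqs_subst_eqs by (auto split: if_splits)

lemma unifies_eliminate:
  "\<sigma> x = subst_trm \<sigma> u \<Longrightarrow> unifies \<sigma> E \<Longrightarrow> unifies \<sigma> (subst_eqs (Var(x := u)) E)"
proof -
  assume "\<sigma> x = subst_trm \<sigma> u"
  then have "(\<lambda>y. subst_trm \<sigma> ((Var(x := u)) y)) = \<sigma>"
    by auto
  then show "unifies \<sigma> E \<Longrightarrow> unifies \<sigma> (subst_eqs (Var(x := u)) E)"
    by (simp add: unifies_subst_eqs)
qed

lemma relevant_idem_mgu_eliminate:
  assumes x: "x \<notin> vars_trm u" and mgu: "relevant_idem_mgu \<theta> (subst_eqs (Var(x := u)) E)"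
  shows "relevant_idem_mgu (\<lambda>y. subst_trm \<theta> ((Var(x := u)) y)) ((Var x, u) # E)"
proof -
  define \<rho> where "\<rho> = Var(x := u)"
  define \<theta>' where "\<theta>' = (\<lambda>y. subst_trm \<theta> (\<rho> y))"
  have unif: "unifies \<theta> (subst_eqs \<rho> E)"
    and general: "\<And>\<sigma>. unifies \<sigma> (subst_eqs \<rho> E) \<Longrightarrow> \<exists>\<delta>. \<forall>y. \<sigma> y = subst_trm \<delta> (\<theta> y)"
    and idem: "\<And>y. subst_trm \<theta> (\<theta> y) = \<theta> y"
    and rel: "subst_vars \<theta> \<subseteq> vars_eqs (subst_eqs \<rho> E)"
    using mgu unfolding relevant_idem_mgu_def idempotent_def \<rho>_def by blast+
  have vars_\<rho>: "vars_trm (\<rho> y) \<subseteq> vars_trm u \<union> {y} - {x}" for y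
    using x unfolding \<rho>_def by auto
  have x_\<theta>: "x \<notin> subst_vars \<theta>" and \<theta>_vars: "subst_vars \<theta> \<subseteq> vars_eqs ((Var x, u) # E)"
    using rel vars_eqs_eliminate[OF x, of E] unfolding \<rho>_def by auto
  have \<rho>_u: "subst_trm \<rho> u = u"
    using x by (subst subst_trm_cong[where \<tau> = Var]) (auto simp: \<rho>_def)
  have "subst_trm \<theta>' u = subst_trm \<theta> (subst_trm \<rho> u)"
    unfolding \<theta>'_def subst_trm_comp ..
  then have "\<theta>' x = subst_trm \<theta>' u"
    using \<rho>_u by (simp add: \<theta>'_def \<rho>_def)
  then have unif': "unifies \<theta>' ((Var x, u) # E)"
    using unif by (simp add: unifies_subst_eqs \<theta>'_def)
  have general': "\<exists>\<delta>. \<forall>y. \<sigma> y = subst_trm \<delta> (\<theta>' y)" if \<sigma>: "unifies \<sigma> ((Var x, u) # E)" for \<sigma>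
  proof -
    have \<sigma>_\<rho>: "(\<lambda>y. subst_trm \<sigma> (\<rho> y)) = \<sigma>"
      using \<sigma> unfolding \<rho>_def by auto
    then have "unifies \<sigma> (subst_eqs \<rho> E)"
      using \<sigma> by (simp add: unifies_subst_eqs)
    then obtain \<delta> where "\<And>y. \<sigma> y = subst_trm \<delta> (\<theta> y)"
      using general by blast
    then have "(\<lambda>y. subst_trm \<delta> (\<theta> y)) = \<sigma>" by auto
    then have "subst_trm \<delta> (\<theta>' y) = \<sigma> y" for y
      using \<sigma>_\<rho> unfolding \<theta>'_def subst_trm_comp by metis
    then show ?thesis by metis
  qed
  have x_\<theta>': "x \<notin> vars_trm (\<theta>' y)" for y
    using vars_subst_trm_subset[of \<theta> "\<rho> y"] vars_\<rho>[of y] x_\<theta> unfolding \<theta>'_def by blast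
  have \<theta>'_\<theta>: "\<theta>' z = \<theta> z" if "z \<noteq> x" for z
    using that unfolding \<theta>'_def \<rho>_def by simp
  have idem': "idempotent \<theta>'"
    unfolding idempotent_def
  proof
    fix y
    have "subst_trm \<theta>' (\<theta>' y) = subst_trm \<theta> (\<theta>' y)"
      by (rule subst_trm_cong) (metis x_\<theta>' \<theta>'_\<theta>)
    also have "\<dots> = \<theta>' y"
      by (simp add: \<theta>'_def subst_trm_comp idem)
    finally show "subst_trm \<theta>' (\<theta>' y) = \<theta>' y" .
  qed
  have "subst_vars \<theta>' \<subseteq> vars_eqs ((Var x, u) # E)"
  proof
    fix z assume "z \<in> subst_vars \<theta>'"
    then obtain y where y: "\<theta>' y \<noteq> Var y" "z = y \<or> z \<in> vars_trm (\<theta>' y)"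
      unfolding subst_vars_def by auto
    have "vars_trm (\<theta>' y) \<subseteq> vars_trm (\<rho> y) \<union> subst_vars \<theta>"
      unfolding \<theta>'_def by (rule vars_subst_trm_subset)
    moreover have "y \<noteq> x \<Longrightarrow> y \<in> subst_vars \<theta>"
      using y(1) \<theta>'_\<theta> unfolding subst_vars_def by auto
    ultimately show "z \<in> vars_eqs ((Var x, u) # E)"
      using y(2) vars_\<rho>[of y] \<theta>_vars by auto
  qed
  with unif' general' idem' show ?thesis
    unfolding relevant_idem_mgu_def \<theta>'_def \<rho>_def by blast
qed

text \<open>Martelli-Montanari unification: eliminating a variable lowers the number of variables,
  deleting a trivial equation or decomposing one lowers \<^const>\<open>size_eqs\<close>, which counts one
  extra per equation.\<close>

lemma unifies_imp_relevant_idem_mgu: "unifies \<sigma> E \<Longrightarrow> \<exists>\<theta>. relevant_idem_mgu \<theta> E"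
proof (induction E arbitrary: \<sigma> rule: wf_induct[OF wf_measures[of "[\<lambda>E. card (vars_eqs E), size_eqs]"]])
  case (1 E)
  let ?less = "measures [\<lambda>E. card (vars_eqs E), size_eqs]"
  have var_case: "\<exists>\<theta>. relevant_idem_mgu \<theta> ((Var x, u) # E')"
    if E: "vars_eqs E = vars_eqs ((Var x, u) # E')" and \<sigma>: "\<sigma> x = subst_trm \<sigma> u" "unifies \<sigma> E'"
      and u: "u \<noteq> Var x" for x u E'
  proof -
    have x: "x \<notin> vars_trm u"
      using size_less_subst_trm[of x u \<sigma>] u \<sigma>(1) by auto
    then have "vars_eqs (subst_eqs (Var(x := u)) E') \<subset> vars_eqs E"
      using vars_eqs_eliminate[OF x, of E'] E by auto
    then have "(subst_eqs (Var(x := u)) E', E) \<in> ?less"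
      by (simp add: psubset_card_mono)
    then obtain \<theta> where "relevant_idem_mgu \<theta> (subst_eqs (Var(x := u)) E')"
      using "1.IH" unifies_eliminate[OF \<sigma>] by blast
    then show ?thesis
      using relevant_idem_mgu_eliminate[OF x] by blast
  qed
  show ?case
  proof (cases E)
    case Nil
    then show ?thesis using relevant_idem_mgu_Nil by blast
  next
    case (Cons st E')
    obtain s t where E: "E = (s, t) # E'"
      using Cons by (cases st) auto
    consider "s = t"
      | x where "s = Var x \<or> t = Var x" "s \<noteq> t"
      | f ss g ts where "s = Fn f ss" "t = Fn g ts"
      by (cases s; cases t) auto
    then show ?thesis
    proof cases
      case 1
      have "card (vars_eqs E') \<le> card (vars_eqs E)"
        using E by (intro card_mono) auto
      then have "(E', E) \<in> ?less"
        using E by (simp add: size_eqs_def le_less)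
      moreover have "unifies \<sigma> E'"
        using "1.prems" E by simp
      ultimately show ?thesis
        using "1.IH" E 1 relevant_idem_mgu_trivial by blast
    next
      case (2 x)
      from 2(1) show ?thesis
      proof
        assume "s = Var x"
        then show ?thesis
          using var_case[of x t E'] "1.prems" E 2 by auto
      next
        assume "t = Var x"
        then have "\<exists>\<theta>. relevant_idem_mgu \<theta> ((Var x, s) # E')"
          using var_case[of x s E'] "1.prems" E 2 by auto
        then show ?thesis
          using E \<open>t = Var x\<close> relevant_idem_mgu_swap by metis
      qed
    next
      case (3 f ss g ts)
      have "Fn f (map (subst_trm \<sigma>) ss) = Fn g (map (subst_trm \<sigma>) ts)"
        using "1.prems" E 3 by simp
      then have fg: "f = g" and len: "length ss = length ts"
        by (auto dest: map_eq_imp_length_eq)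
      have "(zip ss ts @ E', E) \<in> ?less"
        using E 3 size_eqs_zip[OF len] by (simp add: vars_eqs_zip len)
      moreover have "unifies \<sigma> (zip ss ts @ E')"
        using "1.prems" E 3 len by (simp add: unifies_zip)
      ultimately show ?thesis
        using "1.IH" relevant_idem_mgu_decompose[OF len] E 3 fg by blast
    qed
  qed
qed

lemma unifier_imp_relevant_idem_mgu:
  assumes "unifier \<sigma> a b"
  shows "\<exists>\<theta>. is_mgu \<theta> a b \<and> idempotent \<theta> \<and> relevant \<theta> a b"
proof -
  obtain p ts q us where a: "a = Atom p ts" and b: "b = Atom q us"
    by (cases a, cases b)
  have pq: "p = q" and len: "length ts = length us"
    using assms a b by (auto simp: unifier_def dest: map_eq_imp_length_eq)
  have "unifier \<tau> a b \<longleftrightarrow> unifies \<tau> (zip ts us)" for \<tau>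
    using unifies_zip[OF len, of \<tau> "[]"] a b pq by (auto simp: unifier_def unifies_def)
  moreover have "vars_eqs (zip ts us) = vars_atom a \<union> vars_atom b"
    using vars_eqs_zip[OF len, of "[]"] a b by (auto simp: vars_eqs_def)
  ultimately show ?thesis
    using unifies_imp_relevant_idem_mgu assms
    unfolding relevant_idem_mgu_def is_mgu_def relevant_def by metis
qed

section \<open>p-goals\<close>

lemma mem_subst_pg: "(b, q) \<in> subst_pg \<sigma> G \<longleftrightarrow> (\<exists>a. (a, q) \<in> G \<and> b = subst_atom \<sigma> a)"
  unfolding subst_pg_def by force

lemma mem_shift_pg: "(b, q) \<in> shift_pg \<pi> G \<longleftrightarrow> (\<exists>p. (b, p) \<in> G \<and> q = \<pi> p)"
  unfolding shift_pg_def by force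

lemma prios_subst_pg [simp]: "prios (subst_pg \<sigma> G) = prios G"
  unfolding prios_def subst_pg_def by force

lemma prios_shift_pg [simp]: "prios (shift_pg \<pi> G) = \<pi> ` prios G"
  unfolding prios_def shift_pg_def by force

lemma prios_union [simp]: "prios (A \<union> B) = prios A \<union> prios B"
  unfolding prios_def by auto

lemma prios_insert [simp]: "prios (insert (a, p) B) = insert p (prios B)"
  unfolding prios_def by auto

lemma in_prios: "(a, p) \<in> G \<Longrightarrow> p \<in> prios G"
  unfolding prios_def by force

lemma in_priosE: "p \<in> prios G \<Longrightarrow> (\<And>a. (a, p) \<in> G \<Longrightarrow> thesis) \<Longrightarrow> thesis"
  unfolding prios_def by force

lemma prios_mono: "A \<subseteq> B \<Longrightarrow> prios A \<subseteq> prios B"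
  unfolding prios_def by auto

lemma finite_prios: "finite G \<Longrightarrow> finite (prios G)"
  unfolding prios_def by auto

lemma subst_pg_union: "subst_pg \<sigma> (A \<union> B) = subst_pg \<sigma> A \<union> subst_pg \<sigma> B"
  unfolding subst_pg_def by auto

lemma vars_pg_union [simp]: "vars_pg (A \<union> B) = vars_pg A \<union> vars_pg B"
  unfolding vars_pg_def by auto

lemma vars_pg_shift_pg [simp]: "vars_pg (shift_pg \<pi> G) = vars_pg G"
  unfolding vars_pg_def shift_pg_def by force

lemma vars_atom_subset_vars_pg: "(a, p) \<in> G \<Longrightarrow> vars_atom a \<subseteq> vars_pg G"
  unfolding vars_pg_def by force

lemma finite_vars_pg: "finite G \<Longrightarrow> finite (vars_pg G)"
  unfolding vars_pg_def by auto

lemma vars_pg_subst_pg_subset: "vars_pg (subst_pg \<theta> G) \<subseteq> vars_pg G \<union> subst_vars \<theta>"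
  unfolding vars_pg_def subst_pg_def using vars_subst_atom_subset by fastforce

lemma pgoal_atom_unique: "pgoal G \<Longrightarrow> (a, p) \<in> G \<Longrightarrow> (b, p) \<in> G \<Longrightarrow> a = b"
  unfolding pgoal_def inj_on_def by force

lemma pgoal_subst_pg: "pgoal G \<Longrightarrow> pgoal (subst_pg \<sigma> G)"
  unfolding pgoal_def subst_pg_def inj_on_def by (auto simp: case_prod_beta)

lemma pgoal_shift_pg: "inj \<pi> \<Longrightarrow> pgoal G \<Longrightarrow> pgoal (shift_pg \<pi> G)"
  unfolding pgoal_def shift_pg_def inj_on_def by (auto simp: case_prod_beta)

lemma pgoal_union: "pgoal A \<Longrightarrow> pgoal B \<Longrightarrow> prios A \<inter> prios B = {} \<Longrightarrow> pgoal (A \<union> B)"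
  unfolding pgoal_def inj_on_def prios_def by (auto simp: image_iff)

lemma pgoal_subset: "pgoal A \<Longrightarrow> B \<subseteq> A \<Longrightarrow> pgoal B"
  unfolding pgoal_def by (auto intro: finite_subset inj_on_subset)

lemma prios_remove:
  assumes H: "pgoal H" and e: "(e, y) \<in> H"
  shows "prios (H - {(e, y)}) = prios H - {y}"
proof
  show "prios (H - {(e, y)}) \<subseteq> prios H - {y}"
  proof
    fix q assume "q \<in> prios (H - {(e, y)})"
    then obtain b where b: "(b, q) \<in> H" "(b, q) \<noteq> (e, y)" by (auto elim: in_priosE)
    have "q \<noteq> y"
    proof
      assume "q = y"
      with b(1) e have "b = e" using pgoal_atom_unique[OF H] by blast
      with b(2) \<open>q = y\<close> show False by simp
    qed
    with b show "q \<in> prios H - {y}" using in_prios by blast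
  qed
  show "prios H - {y} \<subseteq> prios (H - {(e, y)})"
  proof
    fix q assume "q \<in> prios H - {y}"
    then obtain b where "(b, q) \<in> H" "q \<noteq> y" by (auto elim: in_priosE)
    then show "q \<in> prios (H - {(e, y)})" using in_prios[of b q] by auto
  qed
qed

lemma vars_atom_subset_vars_clause: "(m, s) \<in> snd c \<Longrightarrow> vars_atom m \<subseteq> vars_clause c"
  unfolding vars_clause_def using vars_atom_subset_vars_pg by fastforce

lemma finite_vars_clause: "valid_clause c \<Longrightarrow> finite (vars_clause c)"
  unfolding valid_clause_def vars_clause_def pgoal_def by (auto intro: finite_vars_pg)

lemma first_split_mem: "first_split G a p K \<Longrightarrow> (a, p) \<in> G"
  unfolding first_split_def by blast

lemma first_split_subset: "first_split G a p K \<Longrightarrow> K \<subseteq> G"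
  unfolding first_split_def by blast

lemma first_split_less: "first_split G a p K \<Longrightarrow> q \<in> prios K \<Longrightarrow> p < q"
  unfolding first_split_def by blast

lemma first_split_prios: "first_split G a p K \<Longrightarrow> prios K = prios G - {p}"
  unfolding first_split_def by auto

lemma first_split_unique:
  assumes A: "first_split G a p K" and B: "first_split G a' p' K'"
  shows "a = a' \<and> p = p' \<and> K = K'"
proof -
  have "p \<le> q" if "q \<in> prios G" for q
    using A that unfolding first_split_def by auto
  moreover have "p' \<le> q" if "q \<in> prios G" for q
    using B that unfolding first_split_def by auto
  moreover have "p \<in> prios G"
    using A unfolding first_split_def by auto
  moreover have "p' \<in> prios G"
    using B unfolding first_split_def by auto
  ultimately have pp: "p = p'"
    by (meson order_antisym)
  have "(a', p) \<in> G"
    using B pp unfolding first_split_def by auto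
  then have aa: "a = a'"
    using A unfolding first_split_def by (auto dest: in_prios)
  have "K = G - {(a, p)}" "K' = G - {(a', p')}"
    using A B unfolding first_split_def by auto
  with pp aa show ?thesis by auto
qed

lemma first_split_remove:
  assumes "pgoal G" and "(a, p) \<in> G" and "\<forall>q\<in>prios G. p \<le> q"
  shows "first_split G a p (G - {(a, p)})"
proof -
  have "p < q" if "q \<in> prios (G - {(a, p)})" for q
  proof -
    have "q \<in> prios G" "q \<noteq> p"
      using that prios_remove[OF assms(1,2)] by auto
    with assms(3) show ?thesis by fastforce
  qed
  with assms(2) show ?thesis
    unfolding first_split_def by auto
qed

lemma shifting_id: "shifting id"
  unfolding shifting_def by (auto simp: strict_mono_def)

lemma shifting_translation: "shifting (\<lambda>q::rat. q + C)"
proof -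
  have "bij (\<lambda>q::rat. q + C)"
    by (rule o_bij[where g = "\<lambda>q. q - C"]) (auto simp: fun_eq_iff)
  then show ?thesis
    unfolding shifting_def by (auto simp: strict_mono_def)
qed

lemma shifting_inj: "shifting \<gamma> \<Longrightarrow> inj \<gamma>"
  unfolding shifting_def bij_def by auto

lemma shifting_inv: "shifting \<gamma> \<Longrightarrow> inv \<gamma> (\<gamma> s) = s"
  using shifting_inj inv_f_f by metis

lemma shifting_less_iff: "shifting \<gamma> \<Longrightarrow> \<gamma> s < \<gamma> t \<longleftrightarrow> s < t"
  unfolding shifting_def by (simp add: strict_mono_less)

lemma translation_avoiding:
  fixes A B :: "rat set"
  assumes "finite A" and "finite B"
  shows "\<exists>C. (\<lambda>q. q + C) ` B \<inter> A = {}"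
proof -
  define M where "M = Max (abs ` (A \<union> B) \<union> {0})"
  have bound: "\<bar>x\<bar> \<le> M" if "x \<in> A \<union> B" for x
    unfolding M_def using assms that by (intro Max_ge) auto
  have "b + (2 * M + 1) \<notin> A" if "b \<in> B" for b
  proof
    assume "b + (2 * M + 1) \<in> A"
    then have "\<bar>b + (2 * M + 1)\<bar> \<le> M" "\<bar>b\<bar> \<le> M"
      using bound that by auto
    then show False by linarith
  qed
  then show ?thesis by blast
qed

lemma reducedE:
  assumes "reduced X \<alpha> G N"
  obtains F and h :: nat and a p r A where
    "G = F \<union> (\<lambda>j. (a j, p j)) ` {..<h} \<union> (\<Union>j<h. A j)"
    "N = F \<union> (\<lambda>j. (a j, r j)) ` {..<h}"
    "\<And>j b s. j < h \<Longrightarrow> (b, s) \<in> A j \<Longrightarrow> subst_atom \<alpha> b = a j"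
    "\<And>j. j < h \<Longrightarrow> r j \<in> insert (p j) (prios (A j))"
    "\<And>j q. j < h \<Longrightarrow> q \<in> insert (p j) (prios (A j)) \<Longrightarrow> r j \<le> q"
    "\<And>b s. (b, s) \<in> N \<Longrightarrow> subst_atom \<alpha> b = b"
proof -
  obtain F and h :: nat and a p A where A: "\<forall>j<h. pgoal (A j)"
    and G: "G = F \<union> (\<lambda>j. (a j, p j)) ` {..<h} \<union> (\<Union>j<h. A j)"
    and A_inst: "\<forall>j<h. \<forall>bs\<in>A j. subst_atom \<alpha> (fst bs) = a j"
    and N: "N = F \<union> (\<lambda>j. (a j, Min (insert (p j) (prios (A j))))) ` {..<h}"
    and fix_N: "\<forall>x\<in>X \<union> vars_pg N. \<alpha> x = Var x"
    using assms unfolding reduced_def by blast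
  have fin: "finite (insert (p j) (prios (A j)))" if "j < h" for j
    using A that unfolding pgoal_def by (auto intro: finite_prios)
  have r_in: "Min (insert (p j) (prios (A j))) \<in> insert (p j) (prios (A j))" if "j < h" for j
    using fin[OF that] by (rule Min_in) simp
  have r_le: "Min (insert (p j) (prios (A j))) \<le> q" if "j < h" "q \<in> insert (p j) (prios (A j))" for j q
    using fin[OF that(1)] that(2) by (rule Min_le)
  have fixed: "subst_atom \<alpha> b = b" if "(b, s) \<in> N" for b s
    using fix_N vars_atom_subset_vars_pg[OF that] subst_atom_cong[of b \<alpha> Var] by auto
  have inst: "subst_atom \<alpha> b = a j" if "j < h" "(b, s) \<in> A j" for j b s
    using A_inst that by fastforce
  show thesis
    by (rule that[OF G N inst r_in r_le fixed])
qed

lemma reduced_origin: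
  assumes "reduced X \<alpha> G N" and "(b, s) \<in> N"
  shows "\<exists>b'. (b', s) \<in> G \<and> subst_atom \<alpha> b' = b"
proof -
  obtain F and h :: nat and a p r A where G: "G = F \<union> (\<lambda>j. (a j, p j)) ` {..<h} \<union> (\<Union>j<h. A j)"
    and N: "N = F \<union> (\<lambda>j. (a j, r j)) ` {..<h}"
    and A_inst: "\<And>j b s. j < h \<Longrightarrow> (b, s) \<in> A j \<Longrightarrow> subst_atom \<alpha> b = a j"
    and r_in: "\<And>j. j < h \<Longrightarrow> r j \<in> insert (p j) (prios (A j))"
    and fixed: "\<And>b s. (b, s) \<in> N \<Longrightarrow> subst_atom \<alpha> b = b"
    by (rule reducedE[OF assms(1)]) blast
  show ?thesis
  proof (cases "(b, s) \<in> F")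
    case True
    then show ?thesis using G fixed[OF assms(2)] by blast
  next
    case False
    then obtain j where j: "j < h" "b = a j" "s = r j"
      using assms(2) N by auto
    then consider "s = p j" | b' where "(b', s) \<in> A j"
      using r_in[OF j(1)] by (auto elim: in_priosE)
    then show ?thesis
    proof cases
      case 1
      then show ?thesis using G fixed[OF assms(2)] j by auto
    next
      case 2
      then show ?thesis using G A_inst j by blast
    qed
  qed
qed

lemma reduced_prios: "reduced X \<alpha> G N \<Longrightarrow> prios N \<subseteq> prios G"
  using reduced_origin by (fastforce elim: in_priosE intro: in_prios)

lemma reduced_representative:
  assumes "reduced X \<alpha> G N" and "(b, q) \<in> G"
  shows "\<exists>a r. (a, r) \<in> N \<and> r \<le> q \<and> subst_atom \<alpha> b = a \<and> (q \<notin> prios N \<longrightarrow> r < q)"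
proof -
  obtain F and h :: nat and a p r A where G: "G = F \<union> (\<lambda>j. (a j, p j)) ` {..<h} \<union> (\<Union>j<h. A j)"
    and N: "N = F \<union> (\<lambda>j. (a j, r j)) ` {..<h}"
    and A_inst: "\<And>j b s. j < h \<Longrightarrow> (b, s) \<in> A j \<Longrightarrow> subst_atom \<alpha> b = a j"
    and r_le: "\<And>j q. j < h \<Longrightarrow> q \<in> insert (p j) (prios (A j)) \<Longrightarrow> r j \<le> q"
    and fixed: "\<And>b s. (b, s) \<in> N \<Longrightarrow> subst_atom \<alpha> b = b"
    by (rule reducedE[OF assms(1)]) blast
  have "\<exists>a r. (a, r) \<in> N \<and> r \<le> q \<and> subst_atom \<alpha> b = a"
  proof -
    consider "(b, q) \<in> F" | j where "j < h" "b = a j" "q = p j" | j where "j < h" "(b, q) \<in> A j"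
      using assms(2) G by auto
    then show ?thesis
    proof cases
      case 1
      then show ?thesis using N fixed by blast
    next
      case (2 j)
      then have "(a j, r j) \<in> N"
        using N by blast
      then show ?thesis
        using 2 r_le[of j q] fixed by (intro exI[of _ "a j"] exI[of _ "r j"]) auto
    next
      case (3 j)
      then show ?thesis
        using N r_le[of j q] A_inst in_prios by (intro exI[of _ "a j"] exI[of _ "r j"]) fastforce
    qed
  qed
  then show ?thesis
    using in_prios by (metis order_le_less)
qed

section \<open>Stack-queue steps\<close>

definition sq_resolvent :: "('f,'v) subst \<Rightarrow> (rat \<Rightarrow> rat) \<Rightarrow> ('f,'v) subst
    \<Rightarrow> ('f,'v) pgoal \<Rightarrow> ('f,'v) pgoal \<Rightarrow> ('f,'v) pgoal \<Rightarrow> ('f,'v) pgoal" where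
  "sq_resolvent \<theta> \<gamma> \<xi> Ms K Mq = subst_pg \<theta> (shift_pg \<gamma> (subst_pg \<xi> Ms) \<union> K \<union> shift_pg \<gamma> (subst_pg \<xi> Mq))"

definition sq_layout :: "(rat \<Rightarrow> rat) \<Rightarrow> ('f,'v) pgoal \<Rightarrow> ('f,'v) pgoal \<Rightarrow> ('f,'v) pgoal \<Rightarrow> bool" where
  "sq_layout \<gamma> Ms K Mq \<longleftrightarrow> shifting \<gamma> \<and>
     (\<forall>s\<in>prios Ms. \<forall>k\<in>prios K. \<gamma> s < k) \<and> (\<forall>k\<in>prios K. \<forall>q\<in>prios Mq. k < \<gamma> q) \<and>
     (\<forall>s\<in>prios Ms. \<forall>q\<in>prios Mq. \<gamma> s < \<gamma> q)"

lemma mem_sq_resolvent: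
  "(b, q) \<in> sq_resolvent \<theta> \<gamma> \<xi> Ms K Mq \<longleftrightarrow>
   (\<exists>a. (a, q) \<in> K \<and> b = subst_atom \<theta> a) \<or>
   (\<exists>m s. (m, s) \<in> Ms \<and> q = \<gamma> s \<and> b = subst_atom \<theta> (subst_atom \<xi> m)) \<or>
   (\<exists>m s. (m, s) \<in> Mq \<and> q = \<gamma> s \<and> b = subst_atom \<theta> (subst_atom \<xi> m))"
  unfolding sq_resolvent_def subst_pg_union mem_subst_pg Un_iff mem_shift_pg by blast

lemma prios_sq_resolvent:
  "prios (sq_resolvent \<theta> \<gamma> \<xi> Ms K Mq) = \<gamma> ` prios Ms \<union> prios K \<union> \<gamma> ` prios Mq"
  unfolding sq_resolvent_def by simp

lemma pgoal_sq_resolvent: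
  assumes "pgoal Ms" "pgoal K" "pgoal Mq" and layout: "sq_layout \<gamma> Ms K Mq"
  shows "pgoal (sq_resolvent \<theta> \<gamma> \<xi> Ms K Mq)"
proof -
  have inj: "inj \<gamma>"
    using layout shifting_inj unfolding sq_layout_def by blast
  have "pgoal (shift_pg \<gamma> (subst_pg \<xi> Ms) \<union> K)"
    using assms inj by (intro pgoal_union pgoal_shift_pg pgoal_subst_pg) (force simp: sq_layout_def)+
  then have "pgoal (shift_pg \<gamma> (subst_pg \<xi> Ms) \<union> K \<union> shift_pg \<gamma> (subst_pg \<xi> Mq))"
    using assms inj by (intro pgoal_union pgoal_shift_pg pgoal_subst_pg) (force simp: sq_layout_def)+
  then show ?thesis
    unfolding sq_resolvent_def by (rule pgoal_subst_pg)
qed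

lemma vars_sq_resolvent_subset:
  "vars_pg (sq_resolvent \<theta> \<gamma> \<xi> Ms K Mq) \<subseteq> vars_pg K \<union> vars_pg (subst_pg \<xi> (Ms \<union> Mq)) \<union> subst_vars \<theta>"
  using vars_pg_subst_pg_subset[of \<theta> "shift_pg \<gamma> (subst_pg \<xi> Ms) \<union> K \<union> shift_pg \<gamma> (subst_pg \<xi> Mq)"]
  unfolding sq_resolvent_def subst_pg_union by auto

text \<open>The order embedding after a simulated step: the priorities of the rest of the goal keep
  their images, those of the body move from the shifting \<open>\<gamma>\<close> to \<open>\<gamma>'\<close>.\<close>

lemma strict_mono_on_resolvent:
  fixes f :: "rat \<Rightarrow> rat"
  assumes layout: "sq_layout \<gamma> Ms K Mq" and layout': "sq_layout \<gamma>' Ms K' Mq"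
    and mono: "strict_mono_on (prios K) f" and f_K: "f ` prios K \<subseteq> prios K'"
  defines "f' \<equiv> \<lambda>q. if q \<in> prios K then f q else \<gamma>' (inv \<gamma> q)"
  shows "strict_mono_on (\<gamma> ` prios Ms \<union> prios K \<union> \<gamma> ` prios Mq) f'"
    and "\<And>s. s \<in> prios Ms \<union> prios Mq \<Longrightarrow> f' (\<gamma> s) = \<gamma>' s"
proof -
  have \<gamma>: "shifting \<gamma>" and Ms_K: "\<And>s k. s \<in> prios Ms \<Longrightarrow> k \<in> prios K \<Longrightarrow> \<gamma> s < k"
    and K_Mq: "\<And>k s. k \<in> prios K \<Longrightarrow> s \<in> prios Mq \<Longrightarrow> k < \<gamma> s"
    using layout unfolding sq_layout_def by auto
  have \<gamma>': "shifting \<gamma>'" and Ms_K': "\<And>s k. s \<in> prios Ms \<Longrightarrow> k \<in> prios K' \<Longrightarrow> \<gamma>' s < k"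
    and K_Mq': "\<And>k s. k \<in> prios K' \<Longrightarrow> s \<in> prios Mq \<Longrightarrow> k < \<gamma>' s"
    using layout' unfolding sq_layout_def by auto
  show body: "f' (\<gamma> s) = \<gamma>' s" if "s \<in> prios Ms \<union> prios Mq" for s
  proof -
    have "\<gamma> s \<notin> prios K"
      using that Ms_K K_Mq by (metis Un_iff less_irrefl)
    then show ?thesis
      unfolding f'_def using shifting_inv[OF \<gamma>] by simp
  qed
  show "strict_mono_on (\<gamma> ` prios Ms \<union> prios K \<union> \<gamma> ` prios Mq) f'"
  proof (rule strict_mono_onI)
    fix q1 q2 assume q: "q1 \<in> \<gamma> ` prios Ms \<union> prios K \<union> \<gamma> ` prios Mq"
      "q2 \<in> \<gamma> ` prios Ms \<union> prios K \<union> \<gamma> ` prios Mq" "q1 < q2"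
    consider (KK) "q1 \<in> prios K" "q2 \<in> prios K"
      | (BB) s1 s2 where "q1 = \<gamma> s1" "q2 = \<gamma> s2" "s1 \<in> prios Ms \<union> prios Mq" "s2 \<in> prios Ms \<union> prios Mq"
      | (KB) s2 where "q1 \<in> prios K" "q2 = \<gamma> s2" "s2 \<in> prios Ms \<union> prios Mq"
      | (BK) s1 where "q1 = \<gamma> s1" "s1 \<in> prios Ms \<union> prios Mq" "q2 \<in> prios K"
      using q(1,2) by blast
    then show "f' q1 < f' q2"
    proof cases
      case KK
      then show ?thesis
        using strict_mono_onD[OF mono] q(3) unfolding f'_def by simp
    next
      case (BB s1 s2)
      then have "s1 < s2"
        using q(3) shifting_less_iff[OF \<gamma>] by simp
      then show ?thesis
        using BB body shifting_less_iff[OF \<gamma>'] by simp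
    next
      case (KB s2)
      then have "s2 \<in> prios Mq"
        using q(3) Ms_K by (metis Un_iff order.asym)
      moreover have "f' q1 = f q1"
        using KB(1) unfolding f'_def by simp
      moreover have "f' q2 = \<gamma>' s2"
        using KB(2,3) body by simp
      ultimately show ?thesis
        using K_Mq' f_K KB(1) by auto
    next
      case (BK s1)
      then have "s1 \<in> prios Ms"
        using q(3) K_Mq by (metis Un_iff order.asym)
      moreover have "f' q2 = f q2"
        using BK(3) unfolding f'_def by simp
      moreover have "f' q1 = \<gamma>' s1"
        using BK(1,2) body by simp
      ultimately show ?thesis
        using Ms_K' f_K BK(3) by auto
    qed
  qed
qed

text \<open>\<open>ms c\<close> and \<open>mq c\<close> fix, for every clause \<open>c\<close>, the split of its body into stack and queue
  part whose existence \<^const>\<open>stack_queue\<close> asserts.\<close>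

definition sq_split :: "('f,'v) step set \<Rightarrow> (('f,'v) clause \<Rightarrow> ('f,'v) pgoal)
    \<Rightarrow> (('f,'v) clause \<Rightarrow> ('f,'v) pgoal) \<Rightarrow> bool" where
  "sq_split SQ ms mq \<longleftrightarrow> (\<forall>c. valid_clause c \<longrightarrow> snd c = ms c \<union> mq c \<and>
     (\<forall>G \<xi> \<theta> R a p K. (G, c, \<xi>, \<theta>, R) \<in> SQ \<longrightarrow> first_split G a p K \<longrightarrow>
        (\<exists>\<gamma>. sq_layout \<gamma> (ms c) K (mq c) \<and> R = sq_resolvent \<theta> \<gamma> \<xi> (ms c) K (mq c))))"

lemma sq_layout_iff_below:
  "sq_layout \<gamma> Ms K Mq \<longleftrightarrow> shifting \<gamma> \<and> below (shift_pg \<gamma> (subst_pg \<xi> Ms)) K \<and>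
     below K (shift_pg \<gamma> (subst_pg \<xi> Mq)) \<and> below (shift_pg \<gamma> (subst_pg \<xi> Ms)) (shift_pg \<gamma> (subst_pg \<xi> Mq))"
  unfolding sq_layout_def below_def by simp

lemma stack_queue_imp_sq_split:
  fixes SQ :: "('f,'v) step set"
  assumes "stack_queue SQ"
  shows "\<exists>ms mq. sq_split SQ ms mq"
proof -
  define \<Phi> where "\<Phi> c Ms Mq \<longleftrightarrow> (valid_clause c \<longrightarrow> snd c = Ms \<union> Mq \<and>
     (\<forall>G \<xi> \<theta> R a p K. (G, c, \<xi>, \<theta>, R) \<in> SQ \<longrightarrow> first_split G a p K \<longrightarrow>
        (\<exists>\<gamma>. sq_layout \<gamma> Ms K Mq \<and> R = sq_resolvent \<theta> \<gamma> \<xi> Ms K Mq)))" for c Ms Mq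
  have "\<exists>Ms Mq. \<Phi> c Ms Mq" for c :: "('f,'v) clause"
  proof (cases "valid_clause c")
    case True
    obtain h B where c: "c = (h, B)" by fastforce
    with True have "valid_clause (h, B)" by simp
    from assms[unfolded stack_queue_def, THEN conjunct2, rule_format, OF this]
    obtain Ms Mq where B: "B = Ms \<union> Mq" and steps: "\<forall>G \<xi> \<theta> R. (G, (h, B), \<xi>, \<theta>, R) \<in> SQ \<longrightarrow>
        (\<forall>a p K. first_split G a p K \<longrightarrow> (\<exists>\<gamma>. shifting \<gamma> \<and>
           below (shift_pg \<gamma> (subst_pg \<xi> Ms)) K \<and> below K (shift_pg \<gamma> (subst_pg \<xi> Mq)) \<and>
           below (shift_pg \<gamma> (subst_pg \<xi> Ms)) (shift_pg \<gamma> (subst_pg \<xi> Mq)) \<and>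
           R = subst_pg \<theta> (shift_pg \<gamma> (subst_pg \<xi> Ms) \<union> K \<union> shift_pg \<gamma> (subst_pg \<xi> Mq))))"
      by (elim exE conjE)
    have "\<exists>\<gamma>. sq_layout \<gamma> Ms K Mq \<and> R = sq_resolvent \<theta> \<gamma> \<xi> Ms K Mq"
      if step: "(G, c, \<xi>, \<theta>, R) \<in> SQ" and fs: "first_split G a p K" for G \<xi> \<theta> R a p K
    proof -
      obtain \<gamma> where "shifting \<gamma>" "below (shift_pg \<gamma> (subst_pg \<xi> Ms)) K"
        "below K (shift_pg \<gamma> (subst_pg \<xi> Mq))"
        "below (shift_pg \<gamma> (subst_pg \<xi> Ms)) (shift_pg \<gamma> (subst_pg \<xi> Mq))"
        "R = subst_pg \<theta> (shift_pg \<gamma> (subst_pg \<xi> Ms) \<union> K \<union> shift_pg \<gamma> (subst_pg \<xi> Mq))"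
        using steps step fs unfolding c by blast
      then show ?thesis
        unfolding sq_layout_iff_below[of _ _ _ _ \<xi>] sq_resolvent_def by blast
    qed
    with c B have "\<Phi> c Ms Mq"
      unfolding \<Phi>_def by simp
    then show ?thesis by blast
  qed (auto simp: \<Phi>_def)
  then have "\<forall>c. \<exists>Ms Mq. \<Phi> c Ms Mq" by blast
  from choice[OF this] obtain ms where "\<forall>c. \<exists>Mq. \<Phi> c (ms c) Mq" by blast
  from choice[OF this] obtain mq where "\<forall>c. \<Phi> c (ms c) (mq c)" by blast
  then show ?thesis
    unfolding sq_split_def \<Phi>_def by blast
qed

lemma sq_split_body:
  "sq_split SQ ms mq \<Longrightarrow> valid_clause c \<Longrightarrow> snd c = ms c \<union> mq c"
  unfolding sq_split_def by blast

lemma sq_split_step: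
  assumes "sq_split SQ ms mq" "valid_clause c" "(G, c, \<xi>, \<theta>, R) \<in> SQ" "first_split G a p K"
  obtains \<gamma> where "sq_layout \<gamma> (ms c) K (mq c)" "R = sq_resolvent \<theta> \<gamma> \<xi> (ms c) K (mq c)"
  using assms unfolding sq_split_def by blast

lemma fresh_permutation:
  fixes U V :: "'v set"
  assumes "infinite (UNIV :: 'v set)" and "finite U" and "finite V"
  shows "\<exists>\<pi>. bij \<pi> \<and> \<pi> ` U \<inter> V = {}"
proof -
  have "infinite (UNIV - (U \<union> V))"
    using assms by auto
  then obtain W where W: "W \<subseteq> UNIV - (U \<union> V)" "finite W" "card W = card U"
    using infinite_arbitrarily_large by metis
  then obtain g where g: "bij_betw g U W"
    using finite_same_card_bij[OF assms(2)] by metis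
  define \<pi> where "\<pi> x = (if x \<in> U then g x else if x \<in> W then inv_into U g x else x)" for x
  have "\<pi> (\<pi> x) = x" for x
  proof -
    have "x \<in> U \<Longrightarrow> g x \<in> W" "x \<in> W \<Longrightarrow> inv_into U g x \<in> U" "x \<in> W \<Longrightarrow> g (inv_into U g x) = x"
      using g by (auto simp: bij_betw_def inv_into_into f_inv_into_f)
    moreover have "U \<inter> W = {}"
      using W by auto
    ultimately show ?thesis
      using g unfolding \<pi>_def bij_betw_def by auto
  qed
  then have "bij \<pi>"
    by (intro o_bij[where g = \<pi>]) (auto simp: fun_eq_iff)
  moreover have "\<pi> ` U \<inter> V = {}"
    using g W unfolding \<pi>_def bij_betw_def by auto
  ultimately show ?thesis by blast
qed

lemma vars_clause_rename: "vars_clause (subst_clause (\<lambda>x. Var (\<pi> x)) c) = \<pi> ` vars_clause c"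
  unfolding vars_clause_def subst_clause_def vars_pg_def subst_pg_def
  by (auto simp: vars_subst_atom case_prod_beta image_iff)

lemma renaming_apart:
  assumes "infinite (UNIV :: 'v set)" and "finite V" and "valid_clause (c :: ('f,'v) clause)"
  obtains \<xi> \<sigma> where "renaming \<xi>" "vars_clause (subst_clause \<xi> c) \<inter> V = {}"
    "finite (vars_clause (subst_clause \<xi> c))"
    "\<And>x. x \<in> V \<Longrightarrow> \<sigma> x = \<eta> x" "\<And>x. x \<in> vars_clause c \<Longrightarrow> subst_trm \<sigma> (\<xi> x) = \<zeta> x"
proof -
  have U: "finite (vars_clause c)"
    using assms(3) by (rule finite_vars_clause)
  then obtain \<pi> where \<pi>: "bij \<pi>" "\<pi> ` vars_clause c \<inter> V = {}"
    using fresh_permutation[OF assms(1) _ assms(2)] by blast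
  define \<xi> where "\<xi> = (\<lambda>x. Var (\<pi> x) :: ('f,'v) trm)"
  define \<sigma> where "\<sigma> v = (if v \<in> \<pi> ` vars_clause c then \<zeta> (inv \<pi> v) else \<eta> v)" for v
  have ren: "renaming \<xi>"
    unfolding renaming_def \<xi>_def using \<pi>(1) by blast
  have vars: "vars_clause (subst_clause \<xi> c) = \<pi> ` vars_clause c"
    unfolding \<xi>_def by (rule vars_clause_rename)
  have \<sigma>_V: "\<sigma> x = \<eta> x" if "x \<in> V" for x
    using \<pi>(2) that unfolding \<sigma>_def by auto
  have \<sigma>_\<xi>: "subst_trm \<sigma> (\<xi> x) = \<zeta> x" if "x \<in> vars_clause c" for x
    using that bij_is_inj[OF \<pi>(1)] unfolding \<sigma>_def \<xi>_def by auto
  show thesis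
    by (rule that[OF ren _ _ \<sigma>_V \<sigma>_\<xi>]) (use vars \<pi>(2) U in auto)
qed

lemma pstep_exists:
  assumes "pgoal H" and fs: "first_split H a p K" and c: "valid_clause c" and "renaming \<xi>"
    and "vars_pg H \<inter> vars_clause (subst_clause \<xi> c) = {}"
    and "is_mgu \<theta> a (subst_atom \<xi> (fst c))" "idempotent \<theta>" "relevant \<theta> a (subst_atom \<xi> (fst c))"
  shows "\<exists>\<pi> R. pstep H c \<xi> \<theta> \<pi> R"
proof -
  have "finite K" "finite (snd c)"
    using assms unfolding pgoal_def first_split_def valid_clause_def by auto
  then obtain C where "(\<lambda>q. q + C) ` prios (snd c) \<inter> prios K = {}"
    using translation_avoiding finite_prios by metis
  then have "pstep H c \<xi> \<theta> (\<lambda>q. q + C) (subst_pg \<theta> (K \<union> shift_pg (\<lambda>q. q + C) (subst_pg \<xi> (snd c))))"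
    using assms shifting_translation[of C] unfolding pstep_def
    by (intro conjI exI[where x = a] exI[where x = p] exI[where x = K]) (auto simp: Int_commute)
  then show ?thesis by blast
qed

text \<open>The witness is the lowering by the empty goal, with identity shiftings.\<close>

lemma cong_lowering_same_shifting:
  fixes H :: "('f,'v) pgoal"
  assumes fs: "first_split H a p K" and "pstep H c \<xi>1 \<theta>1 \<pi> R1" and "pstep H c \<xi>2 \<theta>2 \<pi> R2"
  shows "cong_lowering (H, c, \<xi>2, \<theta>2, R2) (H, c, \<xi>1, \<theta>1, R1)"
proof -
  have [simp]: "shift_pg id G = G" "subst_pg Var G = G" for G :: "('f,'v) pgoal"
    unfolding shift_pg_def subst_pg_def by force+
  have "H = insert (a, p) K"
    using fs unfolding first_split_def by blast
  then show ?thesis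
    using assms shifting_id unfolding cong_lowering.simps
    by (intro conjI exI[of _ a] exI[of _ p] exI[of _ K] exI[of _ Var] exI[of _ id] exI[of _ "{}"]
        exI[of _ \<pi>] exI[of _ \<pi>] exI[of _ id]) (simp_all add: pgoal_def prios_def)
qed

section \<open>Lifting\<close>

locale sq_derivations =
  fixes SQ :: "('f,'v) step set" and P :: "('f,'v) clause set"
    and ms mq :: "('f,'v) clause \<Rightarrow> ('f,'v) pgoal"
  assumes infinite_vars: "infinite (UNIV :: 'v set)"
    and complete: "complete_steps SQ"
    and split: "sq_split SQ ms mq"
    and program: "program P"
begin

lemma program_valid_clause: "c \<in> P \<Longrightarrow> valid_clause c"
  using program unfolding program_def by blast

lemma body_split: "c \<in> P \<Longrightarrow> snd c = ms c \<union> mq c"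
  using sq_split_body[OF split program_valid_clause] .

lemma pgoal_body_parts: "c \<in> P \<Longrightarrow> pgoal (ms c) \<and> pgoal (mq c)"
  using program_valid_clause body_split pgoal_subset unfolding valid_clause_def by (metis Un_upper1 Un_upper2)

text \<open>\<open>SQ\<close> need not contain the step built from \<open>\<xi>\<close> and \<open>\<theta>\<close>, but it contains some step of \<open>H\<close>
  with \<open>c\<close>; ours, taken with the shifting of that step, is a congruent lowering of it both ways,
  so completeness puts it into \<open>SQ\<close>.\<close>

lemma sq_step_exists:
  assumes H: "pgoal H" and fs: "first_split H e y K" and c: "c \<in> P" and ren: "renaming \<xi>"
    and disj: "vars_pg H \<inter> vars_clause (subst_clause \<xi> c) = {}"
    and mgu: "is_mgu \<theta> e (subst_atom \<xi> (fst c))" "idempotent \<theta>" "relevant \<theta> e (subst_atom \<xi> (fst c))"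
  obtains \<gamma> where "(H, c, \<xi>, \<theta>, sq_resolvent \<theta> \<gamma> \<xi> (ms c) K (mq c)) \<in> SQ"
    "sq_layout \<gamma> (ms c) K (mq c)"
proof -
  have valid: "valid_clause c"
    using c by (rule program_valid_clause)
  obtain \<pi>' R' where "pstep H c \<xi> \<theta> \<pi>' R'"
    using pstep_exists[OF H fs valid ren disj mgu] by blast
  then have "is_step (H, c, \<xi>, \<theta>, R')" by auto
  then obtain \<xi>0 \<theta>0 R0 where SQ0: "(H, c, \<xi>0, \<theta>0, R0) \<in> SQ"
    using complete unfolding complete_steps_def by blast
  then have "is_step (H, c, \<xi>0, \<theta>0, R0)"
    using complete unfolding complete_steps_def by blast
  then obtain \<pi>0 where step0: "pstep H c \<xi>0 \<theta>0 \<pi>0 R0" by auto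
  then obtain a0 p0 F0 where "first_split H a0 p0 F0" "shifting \<pi>0"
    "prios F0 \<inter> prios (shift_pg \<pi>0 (subst_pg \<xi>0 (snd c))) = {}"
    unfolding pstep_def by blast
  moreover have "F0 = K"
    using first_split_unique[OF \<open>first_split H a0 p0 F0\<close> fs] by blast
  ultimately have step: "pstep H c \<xi> \<theta> \<pi>0 (subst_pg \<theta> (K \<union> shift_pg \<pi>0 (subst_pg \<xi> (snd c))))"
    (is "pstep _ _ _ _ _ ?R")
    unfolding pstep_def using H valid fs ren disj mgu
    by (intro conjI exI[where x = e] exI[where x = y] exI[where x = K]) auto
  have "cong_lowering (H, c, \<xi>, \<theta>, ?R) (H, c, \<xi>0, \<theta>0, R0)"
    and "cong_lowering (H, c, \<xi>0, \<theta>0, R0) (H, c, \<xi>, \<theta>, ?R)"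
    using cong_lowering_same_shifting fs step0 step by blast+
  then have "(H, c, \<xi>, \<theta>, ?R) \<in> SQ"
    using complete SQ0 unfolding complete_steps_def by blast
  with sq_split_step[OF split valid _ fs] show thesis
    using that by metis
qed

lemma sq_step_lifting:
  assumes c: "c \<in> P" and H: "pgoal H" and fs: "first_split H e y K"
    and V: "finite V" "vars_pg H \<subseteq> V"
    and unif: "subst_atom \<eta> e = subst_atom \<zeta> (fst c)"
  obtains \<xi> \<theta> \<gamma> \<delta> where
    "(H, c, \<xi>, \<theta>, sq_resolvent \<theta> \<gamma> \<xi> (ms c) K (mq c)) \<in> SQ"
    "vars_clause (subst_clause \<xi> c) \<inter> V = {}" "finite (vars_clause (subst_clause \<xi> c))"
    "sq_layout \<gamma> (ms c) K (mq c)"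
    "vars_pg (sq_resolvent \<theta> \<gamma> \<xi> (ms c) K (mq c)) \<subseteq> V \<union> vars_clause (subst_clause \<xi> c)"
    "\<And>e' y'. (e', y') \<in> H \<Longrightarrow> subst_atom \<delta> (subst_atom \<theta> e') = subst_atom \<eta> e'"
    "\<And>m s. (m, s) \<in> snd c \<Longrightarrow> subst_atom \<delta> (subst_atom \<theta> (subst_atom \<xi> m)) = subst_atom \<zeta> m"
proof -
  obtain \<xi> \<sigma> where ren: "renaming \<xi>" and fresh: "vars_clause (subst_clause \<xi> c) \<inter> V = {}"
    "finite (vars_clause (subst_clause \<xi> c))"
    and \<sigma>_V: "\<And>x. x \<in> V \<Longrightarrow> \<sigma> x = \<eta> x"
    and \<sigma>_\<xi>: "\<And>x. x \<in> vars_clause c \<Longrightarrow> subst_trm \<sigma> (\<xi> x) = \<zeta> x"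
    using renaming_apart[OF infinite_vars V(1) program_valid_clause[OF c]] by blast
  have e_V: "vars_atom e \<subseteq> V"
    using first_split_mem[OF fs] V(2) vars_atom_subset_vars_pg by blast
  have "subst_atom \<sigma> e = subst_atom \<eta> e"
    using e_V \<sigma>_V by (intro subst_atom_cong) auto
  moreover have "subst_atom \<sigma> (subst_atom \<xi> (fst c)) = subst_atom \<zeta> (fst c)"
    unfolding subst_atom_comp using \<sigma>_\<xi> by (intro subst_atom_cong) (auto simp: vars_clause_def)
  ultimately have \<sigma>_unif: "unifier \<sigma> e (subst_atom \<xi> (fst c))"
    using unif unfolding unifier_def by simp
  then obtain \<theta> where mgu: "is_mgu \<theta> e (subst_atom \<xi> (fst c))" "idempotent \<theta>"
    "relevant \<theta> e (subst_atom \<xi> (fst c))"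
    using unifier_imp_relevant_idem_mgu by blast
  then obtain \<delta> where "\<And>x. \<sigma> x = subst_trm \<delta> (\<theta> x)"
    using \<sigma>_unif unfolding is_mgu_def by blast
  then have \<delta>: "(\<lambda>x. subst_trm \<delta> (\<theta> x)) = \<sigma>" by auto
  have "vars_pg H \<inter> vars_clause (subst_clause \<xi> c) = {}"
    using fresh(1) V(2) by blast
  then obtain \<gamma> where step: "(H, c, \<xi>, \<theta>, sq_resolvent \<theta> \<gamma> \<xi> (ms c) K (mq c)) \<in> SQ"
    and layout: "sq_layout \<gamma> (ms c) K (mq c)"
    using sq_step_exists[OF H fs c ren _ mgu] by blast
  have "vars_pg K \<subseteq> V"
    using V(2) first_split_subset[OF fs] unfolding vars_pg_def by auto
  moreover have "vars_pg (subst_pg \<xi> (ms c \<union> mq c)) \<subseteq> vars_clause (subst_clause \<xi> c)"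
    using body_split[OF c] unfolding vars_clause_def subst_clause_def by auto
  moreover have "subst_vars \<theta> \<subseteq> V \<union> vars_clause (subst_clause \<xi> c)"
    using mgu(3) e_V unfolding relevant_def vars_clause_def subst_clause_def by auto
  ultimately have "vars_pg (sq_resolvent \<theta> \<gamma> \<xi> (ms c) K (mq c)) \<subseteq> V \<union> vars_clause (subst_clause \<xi> c)"
    using vars_sq_resolvent_subset[of \<theta> \<gamma> \<xi> "ms c" K "mq c"] by blast
  moreover have "subst_atom \<delta> (subst_atom \<theta> e') = subst_atom \<eta> e'" if "(e', y') \<in> H" for e' y'
    using vars_atom_subset_vars_pg[OF that] V(2) \<sigma>_V
    unfolding subst_atom_comp \<delta> by (intro subst_atom_cong) auto
  moreover have "subst_atom \<delta> (subst_atom \<theta> (subst_atom \<xi> m)) = subst_atom \<zeta> m" if "(m, s) \<in> snd c" for m s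
    using vars_atom_subset_vars_clause[OF that] \<sigma>_\<xi>
    unfolding subst_atom_comp subst_trm_comp \<delta> by (intro subst_atom_cong) auto
  ultimately show ?thesis
    using that step fresh layout by metis
qed

section \<open>Covered atoms and simulating goals\<close>

text \<open>\<open>covered PP A x\<close>: the atom \<open>A\<close>, put at priority \<open>x\<close>, can be resolved away by stack-queue
  steps down to atoms that occur in \<open>PP\<close> at priorities below \<open>x\<close>; the stack part of each body
  stays at \<open>x\<close>, the queue part may be placed anywhere after it.\<close>

inductive covered :: "('f,'v) pgoal \<Rightarrow> ('f,'v) atom \<Rightarrow> rat \<Rightarrow> bool" for PP where
  covered_occurs: "(A, y) \<in> PP \<Longrightarrow> y < x \<Longrightarrow> covered PP A x"
| covered_clause: "c \<in> P \<Longrightarrow> A = subst_atom \<zeta> (fst c) \<Longrightarrow>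
    (\<forall>m\<in>ms c. covered PP (subst_atom \<zeta> (fst m)) x) \<Longrightarrow>
    (\<forall>m\<in>mq c. \<exists>x'\<ge>x. covered PP (subst_atom \<zeta> (fst m)) x') \<Longrightarrow> covered PP A x"

lemma covered_transfer:
  assumes "covered PP A x" and "\<And>a y. (a, y) \<in> PP \<Longrightarrow> y < x \<Longrightarrow> y < z"
  shows "covered PP A z"
  using assms
proof (induction arbitrary: z rule: covered.induct)
  case (covered_occurs A y x)
  then show ?case by (blast intro: covered.covered_occurs)
next
  case (covered_clause c A \<zeta> x)
  have "\<forall>m\<in>ms c. covered PP (subst_atom \<zeta> (fst m)) z"
    using covered_clause.IH(1) covered_clause.prems by blast
  moreover have "\<exists>x''\<ge>z. covered PP (subst_atom \<zeta> (fst m)) x''" if "m \<in> mq c" for m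
  proof -
    from bspec[OF covered_clause.IH(2) that] obtain x' where
      "\<forall>z'. (\<forall>a y. (a, y) \<in> PP \<longrightarrow> y < x' \<longrightarrow> y < z') \<longrightarrow> covered PP (subst_atom \<zeta> (fst m)) z'"
      by (elim exE conjE)
    then have "covered PP (subst_atom \<zeta> (fst m)) (max x' z)"
      by (simp add: less_max_iff_disj)
    then show ?thesis
      by (intro exI[of _ "max x' z"]) simp
  qed
  ultimately show ?case
    using covered_clause.hyps by (intro covered.covered_clause) auto
qed

lemma covered_subst:
  assumes "covered PP A x" and "L \<le> x"
    and "\<And>a y x. (a, y) \<in> PP \<Longrightarrow> y < x \<Longrightarrow> L \<le> x \<Longrightarrow> covered PP' (subst_atom \<sigma> a) x"
  shows "covered PP' (subst_atom \<sigma> A) x"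
  using assms(1,2)
proof (induction rule: covered.induct)
  case (covered_occurs A y x)
  then show ?case using assms(3) by blast
next
  case (covered_clause c A \<zeta> x)
  let ?\<zeta> = "\<lambda>v. subst_trm \<sigma> (\<zeta> v)"
  have "subst_atom \<sigma> A = subst_atom ?\<zeta> (fst c)"
    unfolding covered_clause.hyps(2) subst_atom_comp ..
  moreover have "\<forall>m\<in>ms c. covered PP' (subst_atom ?\<zeta> (fst m)) x"
    using covered_clause.IH(1) covered_clause.prems unfolding subst_atom_comp[symmetric] by blast
  moreover have "\<forall>m\<in>mq c. \<exists>x'\<ge>x. covered PP' (subst_atom ?\<zeta> (fst m)) x'"
    using covered_clause.IH(2) covered_clause.prems unfolding subst_atom_comp[symmetric]
    by (meson order_trans)
  ultimately show ?case
    by (rule covered.covered_clause[OF covered_clause.hyps(1)])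
qed

lemma covered_head:
  assumes "c \<in> P"
    and "\<forall>m\<in>ms c. \<exists>y<x. (subst_atom \<zeta> (fst m), y) \<in> PP"
    and "\<forall>m\<in>mq c. \<exists>y. (subst_atom \<zeta> (fst m), y) \<in> PP"
  shows "covered PP (subst_atom \<zeta> (fst c)) x"
proof (rule covered_clause[OF assms(1) refl])
  show "\<forall>m\<in>ms c. covered PP (subst_atom \<zeta> (fst m)) x"
    using assms(2) by (blast intro: covered_occurs)
  show "\<forall>m\<in>mq c. \<exists>x'\<ge>x. covered PP (subst_atom \<zeta> (fst m)) x'"
  proof
    fix m assume "m \<in> mq c"
    then obtain y where "(subst_atom \<zeta> (fst m), y) \<in> PP"
      using assms(3) by blast
    then have "covered PP (subst_atom \<zeta> (fst m)) (max x (y + 1))"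
      by (rule covered_occurs) simp
    then show "\<exists>x'\<ge>x. covered PP (subst_atom \<zeta> (fst m)) x'"
      by (intro exI[of _ "max x (y + 1)"]) simp
  qed
qed

text \<open>The extra atoms of \<open>H\<close>, at priorities outside the image of \<open>f\<close>, are the copies that
  reduction merged away.\<close>

definition simulates :: "('f,'v) pgoal \<Rightarrow> (rat \<Rightarrow> rat) \<Rightarrow> ('f,'v) pgoal \<Rightarrow> ('f,'v) subst \<Rightarrow> bool" where
  "simulates N f H \<eta> \<longleftrightarrow> pgoal H \<and> strict_mono_on (prios N) f \<and>
     (\<forall>a p. (a, p) \<in> N \<longrightarrow> (\<exists>e. (e, f p) \<in> H \<and> subst_atom \<eta> e = a)) \<and>
     (\<forall>e y. (e, y) \<in> H \<longrightarrow> y \<notin> f ` prios N \<longrightarrow> covered (shift_pg f N) (subst_atom \<eta> e) y)"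

lemma simulates_prios: "simulates N f H \<eta> \<Longrightarrow> f ` prios N \<subseteq> prios H"
  unfolding simulates_def by (auto elim!: in_priosE dest: in_prios)

lemma simulates_refl: "pgoal G \<Longrightarrow> simulates G id G Var"
  unfolding simulates_def by (auto simp: strict_mono_on_def dest: in_prios)

lemma covered_reduced:
  assumes red: "reduced X \<alpha> G N" and mono: "strict_mono_on (prios G) f"
    and "covered (shift_pg f G) B z"
  shows "covered (shift_pg f N) (subst_atom \<alpha> B) z"
  using assms(3)
proof (rule covered_subst[OF _ order_refl])
  fix a y x assume "(a, y) \<in> shift_pg f G" "y < x"
  then obtain q where q: "(a, q) \<in> G" "y = f q" "y < x"
    by (auto simp: mem_shift_pg)
  then obtain a' r where ar: "(a', r) \<in> N" "r \<le> q" "subst_atom \<alpha> a = a'"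
    using reduced_representative[OF red] by blast
  have "f r \<le> f q"
    using strict_mono_on_leD[OF mono] ar reduced_prios[OF red] in_prios q by blast
  moreover have "(a', f r) \<in> shift_pg f N"
    using ar by (auto simp: mem_shift_pg)
  ultimately show "covered (shift_pg f N) (subst_atom \<alpha> a) x"
    using q ar by (auto intro: covered_occurs)
qed

lemma simulates_reduced:
  assumes sim: "simulates G f H \<eta>" and red: "reduced X \<alpha> G N"
  shows "simulates N f H (\<lambda>x. subst_trm \<alpha> (\<eta> x))"
proof -
  have H: "pgoal H" and mono: "strict_mono_on (prios G) f"
    and G_H: "\<And>a p. (a, p) \<in> G \<Longrightarrow> \<exists>e. (e, f p) \<in> H \<and> subst_atom \<eta> e = a"
    and extra: "\<And>e y. (e, y) \<in> H \<Longrightarrow> y \<notin> f ` prios G \<Longrightarrow> covered (shift_pg f G) (subst_atom \<eta> e) y"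
    using sim unfolding simulates_def by auto
  have comp: "subst_atom (\<lambda>x. subst_trm \<alpha> (\<eta> x)) e = subst_atom \<alpha> (subst_atom \<eta> e)" for e
    by (simp add: subst_atom_comp)
  have "\<exists>e. (e, f r) \<in> H \<and> subst_atom (\<lambda>x. subst_trm \<alpha> (\<eta> x)) e = a" if "(a, r) \<in> N" for a r
    using reduced_origin[OF red that] G_H comp by metis
  moreover have "covered (shift_pg f N) (subst_atom (\<lambda>x. subst_trm \<alpha> (\<eta> x)) e) z"
    if ez: "(e, z) \<in> H" "z \<notin> f ` prios N" for e z
  proof (cases "z \<in> f ` prios G")
    case True
    then obtain q b where q: "z = f q" "(b, q) \<in> G"
      by (auto elim: in_priosE)
    then obtain e' where e': "(e', f q) \<in> H" "subst_atom \<eta> e' = b"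
      using G_H by blast
    have "e' = e"
      using pgoal_atom_unique[OF H e'(1)] ez q by auto
    moreover have "q \<notin> prios N"
      using ez q by auto
    then obtain a r where ar: "(a, r) \<in> N" "subst_atom \<alpha> b = a" "r < q"
      using reduced_representative[OF red q(2)] by blast
    moreover have "f r < z"
      using strict_mono_onD[OF mono] ar reduced_prios[OF red] in_prios q by blast
    moreover have "(a, f r) \<in> shift_pg f N"
      using ar(1) by (auto simp: mem_shift_pg)
    ultimately show ?thesis
      using e' comp by (auto intro: covered_occurs)
  next
    case False
    then show ?thesis
      using covered_reduced[OF red mono] extra ez(1) comp by simp
  qed
  ultimately show ?thesis
    using H mono reduced_prios[OF red] unfolding simulates_def by (blast intro: monotone_on_subset)
qed

lemma card_le_if_simulates:
  assumes "simulates N f H \<eta>"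
  shows "card N \<le> card H"
proof -
  have inj: "inj_on f (prios N)"
    using assms strict_mono_on_imp_inj_on unfolding simulates_def by blast
  define h where "h = (\<lambda>(e, y). (subst_atom \<eta> e, the_inv_into (prios N) f y))"
  have "N \<subseteq> h ` H"
  proof
    fix ap assume "ap \<in> N"
    then obtain a p where ap: "ap = (a, p)" "(a, p) \<in> N"
      by (cases ap) auto
    then obtain e where "(e, f p) \<in> H" "subst_atom \<eta> e = a"
      using assms unfolding simulates_def by blast
    moreover have "the_inv_into (prios N) f (f p) = p"
      using the_inv_into_f_f[OF inj] in_prios[OF ap(2)] by blast
    ultimately show "ap \<in> h ` H"
      unfolding h_def ap(1) by (force intro: rev_image_eqI)
  qed
  moreover have "finite H"
    using assms unfolding simulates_def pgoal_def by blast
  ultimately show ?thesis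
    by (meson card_image_le card_mono finite_imageI le_trans)
qed

section \<open>Derivation segments\<close>

text \<open>\<open>V\<close> accumulates the variables of the initial goal and of the renamed clauses used so far,
  which every further renamed clause has to avoid.\<close>

inductive sld_seg :: "'v set \<Rightarrow> ('f,'v) pgoal \<Rightarrow> ('f,'v) clause list \<Rightarrow> 'v set \<Rightarrow> ('f,'v) pgoal \<Rightarrow> bool" where
  sld_seg_Nil: "sld_seg V H [] V H"
| sld_seg_Cons: "(H, c, \<xi>, \<theta>, H1) \<in> SQ \<Longrightarrow> c \<in> P \<Longrightarrow> vars_clause (subst_clause \<xi> c) \<inter> V = {} \<Longrightarrow>
    sld_seg (V \<union> vars_clause (subst_clause \<xi> c)) H1 Z V' H' \<Longrightarrow> sld_seg V H (c # Z) V' H'"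

lemma sld_seg_append:
  "sld_seg V H Z1 V1 H1 \<Longrightarrow> sld_seg V1 H1 Z2 V2 H2 \<Longrightarrow> sld_seg V H (Z1 @ Z2) V2 H2"
  by (induction rule: sld_seg.induct) (auto intro: sld_seg.intros)

lemma sld_seg_single:
  "(H, c, \<xi>, \<theta>, H1) \<in> SQ \<Longrightarrow> c \<in> P \<Longrightarrow> vars_clause (subst_clause \<xi> c) \<inter> V = {} \<Longrightarrow>
   sld_seg V H [c] (V \<union> vars_clause (subst_clause \<xi> c)) H1"
  by (auto intro: sld_seg.intros)

lemma sld_seg_imp_sld_deriv:
  assumes "sld_seg V H Z V' H'"
  shows "\<exists>(m::nat) Gs cs \<xi>s \<theta>s. Gs 0 = H \<and> Gs m = H' \<and> Z = map cs [0..<m] \<and>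
    (\<forall>j<m. cs j \<in> P \<and> is_step (Gs j, cs j, \<xi>s j, \<theta>s j, Gs (Suc j)) \<and>
       (Gs j, cs j, \<xi>s j, \<theta>s j, Gs (Suc j)) \<in> SQ \<and>
       vars_clause (subst_clause (\<xi>s j) (cs j)) \<inter> (V \<union> (\<Union>i<j. vars_clause (subst_clause (\<xi>s i) (cs i)))) = {})"
  using assms
proof (induction rule: sld_seg.induct)
  case (sld_seg_Nil V H)
  show ?case by (intro exI[of _ 0]) auto
next
  case (sld_seg_Cons H c \<xi> \<theta> H1 V Z V' H')
  obtain m Gs cs \<xi>s \<theta>s where IH: "Gs 0 = H1" "Gs m = H'" "Z = map cs [0..<m]"
    "\<forall>j<m. cs j \<in> P \<and> is_step (Gs j, cs j, \<xi>s j, \<theta>s j, Gs (Suc j)) \<and>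
       (Gs j, cs j, \<xi>s j, \<theta>s j, Gs (Suc j)) \<in> SQ \<and>
       vars_clause (subst_clause (\<xi>s j) (cs j)) \<inter>
         (V \<union> vars_clause (subst_clause \<xi> c) \<union> (\<Union>i<j. vars_clause (subst_clause (\<xi>s i) (cs i)))) = {}"
    using sld_seg_Cons.IH by blast
  have step0: "is_step (H, c, \<xi>, \<theta>, H1)"
    using complete sld_seg_Cons.hyps(1) unfolding complete_steps_def by blast
  have union: "(\<Union>i<Suc j. vars_clause (subst_clause (case_nat \<xi> \<xi>s i) (case_nat c cs i))) =
      vars_clause (subst_clause \<xi> c) \<union> (\<Union>i<j. vars_clause (subst_clause (\<xi>s i) (cs i)))" for j
    by (simp add: lessThan_Suc_eq_insert_0 image_image)
  have "\<forall>j<Suc m. case_nat c cs j \<in> P \<and>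
      is_step (case_nat H Gs j, case_nat c cs j, case_nat \<xi> \<xi>s j, case_nat \<theta> \<theta>s j, case_nat H Gs (Suc j)) \<and>
      (case_nat H Gs j, case_nat c cs j, case_nat \<xi> \<xi>s j, case_nat \<theta> \<theta>s j, case_nat H Gs (Suc j)) \<in> SQ \<and>
      vars_clause (subst_clause (case_nat \<xi> \<xi>s j) (case_nat c cs j)) \<inter>
        (V \<union> (\<Union>i<j. vars_clause (subst_clause (case_nat \<xi> \<xi>s i) (case_nat c cs i)))) = {}"
  proof (intro allI impI)
    fix j assume "j < Suc m"
    then consider "j = 0" | k where "j = Suc k" "k < m"
      by (cases j) auto
    then show "case_nat c cs j \<in> P \<and>
      is_step (case_nat H Gs j, case_nat c cs j, case_nat \<xi> \<xi>s j, case_nat \<theta> \<theta>s j, case_nat H Gs (Suc j)) \<and>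
      (case_nat H Gs j, case_nat c cs j, case_nat \<xi> \<xi>s j, case_nat \<theta> \<theta>s j, case_nat H Gs (Suc j)) \<in> SQ \<and>
      vars_clause (subst_clause (case_nat \<xi> \<xi>s j) (case_nat c cs j)) \<inter>
        (V \<union> (\<Union>i<j. vars_clause (subst_clause (case_nat \<xi> \<xi>s i) (case_nat c cs i)))) = {}"
    proof cases
      case 1
      then show ?thesis
        using sld_seg_Cons.hyps(1-3) step0 IH(1) by simp
    next
      case (2 k)
      show ?thesis
        using IH(4) 2(2) unfolding 2(1) union by (simp add: Un_assoc)
    qed
  qed
  moreover have "c # Z = map (case_nat c cs) [0..<Suc m]"
    using IH(3) by (simp add: map_upt_Suc del: upt_Suc)
  ultimately show ?case
    using IH(2) by (intro exI[of _ "Suc m"] exI[of _ "case_nat H Gs"] exI[of _ "case_nat c cs"]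
        exI[of _ "case_nat \<xi> \<xi>s"] exI[of _ "case_nat \<theta> \<theta>s"]) simp
qed

section \<open>Clearing the front of a simulating goal\<close>

definition clears :: "('f,'v) pgoal \<Rightarrow> (rat \<Rightarrow> rat) \<Rightarrow> rat set \<Rightarrow> 'v set \<Rightarrow> ('f,'v) pgoal \<Rightarrow> ('f,'v) subst
    \<Rightarrow> ('f,'v) clause list \<Rightarrow> 'v set \<Rightarrow> ('f,'v) pgoal \<Rightarrow> ('f,'v) subst \<Rightarrow> bool" where
  "clears N f S V H \<eta> Z V' H' \<eta>' \<longleftrightarrow> sld_seg V H Z V' H' \<and>
     simulates N f H' \<eta>' \<and> finite V' \<and> vars_pg H' \<subseteq> V' \<and>
     (\<forall>q\<in>prios H'. q \<in> prios H - S \<or> (\<forall>r\<in>prios H - S. r < q)) \<and>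
     (\<forall>e y. (e, y) \<in> H \<longrightarrow> y \<notin> S \<longrightarrow> (\<exists>e'. (e', y) \<in> H' \<and> subst_atom \<eta>' e' = subst_atom \<eta> e))"

text \<open>Quantifying over all simulating goals lets the induction on coverings below use its
  hypotheses for goals produced by earlier steps.\<close>

definition front_clearable :: "('f,'v) pgoal \<Rightarrow> (rat \<Rightarrow> rat) \<Rightarrow> ('f,'v) atom \<Rightarrow> bool" where
  "front_clearable N f A \<longleftrightarrow> (\<forall>V H \<eta> e y. simulates N f H \<eta> \<longrightarrow> finite V \<longrightarrow> vars_pg H \<subseteq> V \<longrightarrow>
     (e, y) \<in> H \<longrightarrow> y \<notin> f ` prios N \<longrightarrow> (\<forall>q\<in>prios H. y \<le> q) \<longrightarrow> subst_atom \<eta> e = A \<longrightarrow>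
     (\<exists>Z V' H' \<eta>'. clears N f {y} V H \<eta> Z V' H' \<eta>'))"

lemma front_clearableD:
  "front_clearable N f A \<Longrightarrow> simulates N f H \<eta> \<Longrightarrow> finite V \<Longrightarrow> vars_pg H \<subseteq> V \<Longrightarrow>
   (e, y) \<in> H \<Longrightarrow> y \<notin> f ` prios N \<Longrightarrow> \<forall>q\<in>prios H. y \<le> q \<Longrightarrow> subst_atom \<eta> e = A \<Longrightarrow>
   \<exists>Z V' H' \<eta>'. clears N f {y} V H \<eta> Z V' H' \<eta>'"
  unfolding front_clearable_def by blast

lemma clears_Nil: "simulates N f H \<eta> \<Longrightarrow> finite V \<Longrightarrow> vars_pg H \<subseteq> V \<Longrightarrow> clears N f {} V H \<eta> [] V H \<eta>"
  unfolding clears_def by (auto intro: sld_seg_Nil)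

lemma clears_trans:
  assumes 1: "clears N f S1 V H \<eta> Z1 V1 H1 \<eta>1" and 2: "clears N f S2 V1 H1 \<eta>1 Z2 V2 H2 \<eta>2"
  shows "clears N f (S1 \<union> S2) V H \<eta> (Z1 @ Z2) V2 H2 \<eta>2"
proof -
  have new1: "\<And>q. q \<in> prios H1 \<Longrightarrow> q \<in> prios H - S1 \<or> (\<forall>r\<in>prios H - S1. r < q)"
    and kept1: "\<And>e y. (e, y) \<in> H \<Longrightarrow> y \<notin> S1 \<Longrightarrow> \<exists>e'. (e', y) \<in> H1 \<and> subst_atom \<eta>1 e' = subst_atom \<eta> e"
    using 1 unfolding clears_def by blast+
  have new2: "\<And>q. q \<in> prios H2 \<Longrightarrow> q \<in> prios H1 - S2 \<or> (\<forall>r\<in>prios H1 - S2. r < q)"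
    and kept2: "\<And>e y. (e, y) \<in> H1 \<Longrightarrow> y \<notin> S2 \<Longrightarrow> \<exists>e'. (e', y) \<in> H2 \<and> subst_atom \<eta>2 e' = subst_atom \<eta>1 e"
    using 2 unfolding clears_def by blast+
  have kept_prios: "prios H - (S1 \<union> S2) \<subseteq> prios H1 - S2"
  proof
    fix q assume q: "q \<in> prios H - (S1 \<union> S2)"
    then obtain e where "(e, q) \<in> H"
      by (auto elim: in_priosE)
    then obtain e' where "(e', q) \<in> H1"
      using kept1 q by blast
    then show "q \<in> prios H1 - S2"
      using q in_prios by blast
  qed
  have "q \<in> prios H - (S1 \<union> S2) \<or> (\<forall>r\<in>prios H - (S1 \<union> S2). r < q)" if "q \<in> prios H2" for q
    using new2[OF that] new1 kept_prios by blast
  moreover have "\<exists>e'. (e', y) \<in> H2 \<and> subst_atom \<eta>2 e' = subst_atom \<eta> e"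
    if "(e, y) \<in> H" "y \<notin> S1 \<union> S2" for e y
    using kept1[of e y] kept2 that by fastforce
  moreover have "sld_seg V H (Z1 @ Z2) V2 H2"
    using 1 2 sld_seg_append unfolding clears_def by blast
  ultimately show ?thesis
    using 2 unfolding clears_def by blast
qed

lemma clears_front_set:
  assumes "finite S"
  shows "S \<subseteq> prios H \<Longrightarrow> \<forall>s\<in>S. \<forall>r\<in>prios H - S. s < r \<Longrightarrow> S \<inter> f ` prios N = {} \<Longrightarrow>
    \<forall>s\<in>S. \<exists>e. (e, s) \<in> H \<and> front_clearable N f (subst_atom \<eta> e) \<Longrightarrow>
    simulates N f H \<eta> \<Longrightarrow> finite V \<Longrightarrow> vars_pg H \<subseteq> V \<Longrightarrow> \<exists>Z V' H' \<eta>'. clears N f S V H \<eta> Z V' H' \<eta>'"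
  using assms
proof (induction S arbitrary: H \<eta> V rule: finite_psubset_induct)
  case (psubset S)
  show ?case
  proof (cases "S = {}")
    case True
    then show ?thesis
      using clears_Nil psubset.prems by blast
  next
    case False
    define s where "s = Min S"
    have s: "s \<in> S"
      using False psubset.hyps unfolding s_def by simp
    have s_min: "\<forall>q\<in>prios H. s \<le> q"
      using psubset.prems(2) psubset.hyps s unfolding s_def by (metis DiffI Min_le order_less_imp_le)
    obtain e where e: "(e, s) \<in> H" "front_clearable N f (subst_atom \<eta> e)"
      using psubset.prems(4) s by blast
    have "s \<notin> f ` prios N"
      using psubset.prems(3) s by blast
    then obtain Z1 V1 H1 \<eta>1 where 1: "clears N f {s} V H \<eta> Z1 V1 H1 \<eta>1"
      using front_clearableD[OF e(2) psubset.prems(5-7) e(1) _ s_min refl] by blast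
    then have sim1: "simulates N f H1 \<eta>1" "finite V1" "vars_pg H1 \<subseteq> V1"
      and new1: "\<And>q. q \<in> prios H1 \<Longrightarrow> q \<in> prios H - {s} \<or> (\<forall>r\<in>prios H - {s}. r < q)"
      and kept1: "\<And>e y. (e, y) \<in> H \<Longrightarrow> y \<noteq> s \<Longrightarrow> \<exists>e'. (e', y) \<in> H1 \<and> subst_atom \<eta>1 e' = subst_atom \<eta> e"
      unfolding clears_def by blast+
    define S' where "S' = S - {s}"
    have atoms': "\<forall>s'\<in>S'. \<exists>e. (e, s') \<in> H1 \<and> front_clearable N f (subst_atom \<eta>1 e)"
      using psubset.prems(4) kept1 unfolding S'_def by (metis DiffE singletonI)
    then have S'_H1: "S' \<subseteq> prios H1"
      using in_prios by blast
    have below': "\<forall>s'\<in>S'. \<forall>r\<in>prios H1 - S'. s' < r"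
      using new1 psubset.prems(1,2) unfolding S'_def by blast
    have "S' \<subset> S" "S' \<inter> f ` prios N = {}"
      using s psubset.prems(3) unfolding S'_def by blast+
    then obtain Z2 V2 H2 \<eta>2 where 2: "clears N f S' V1 H1 \<eta>1 Z2 V2 H2 \<eta>2"
      using psubset.IH[OF _ S'_H1 below' _ atoms' sim1] by blast
    have "{s} \<union> S' = S"
      using s unfolding S'_def by blast
    then show ?thesis
      using clears_trans[OF 1 2] by metis
  qed
qed

lemma simulates_resolve_extra:
  assumes sim: "simulates N f H \<eta>" and fs: "first_split H e y K" and y: "y \<notin> f ` prios N"
    and c: "c \<in> P" and layout: "sq_layout \<gamma> (ms c) K (mq c)"
    and img_K: "\<And>e' y'. (e', y') \<in> H \<Longrightarrow> subst_atom \<delta> (subst_atom \<theta> e') = subst_atom \<eta> e'"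
    and img_B: "\<And>m s. (m, s) \<in> snd c \<Longrightarrow> subst_atom \<delta> (subst_atom \<theta> (subst_atom \<xi> m)) = subst_atom \<zeta> m"
    and stack_covered: "\<And>m z. m \<in> ms c \<Longrightarrow> covered (shift_pg f N) (subst_atom \<zeta> (fst m)) z"
    and queue_covered: "\<And>m. m \<in> mq c \<Longrightarrow> \<exists>x. covered (shift_pg f N) (subst_atom \<zeta> (fst m)) x"
  shows "simulates N f (sq_resolvent \<theta> \<gamma> \<xi> (ms c) K (mq c)) \<delta>"
proof -
  let ?H' = "sq_resolvent \<theta> \<gamma> \<xi> (ms c) K (mq c)"
  have H: "pgoal H" and mono: "strict_mono_on (prios N) f"
    and N_H: "\<And>a p. (a, p) \<in> N \<Longrightarrow> \<exists>e. (e, f p) \<in> H \<and> subst_atom \<eta> e = a"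
    and extra: "\<And>e y. (e, y) \<in> H \<Longrightarrow> y \<notin> f ` prios N \<Longrightarrow> covered (shift_pg f N) (subst_atom \<eta> e) y"
    using sim unfolding simulates_def by auto
  have K_H: "K \<subseteq> H"
    using fs by (rule first_split_subset)
  have in_K: "(e', y') \<in> K" if "(e', y') \<in> H" "y' \<noteq> y" for e' y'
    using fs that unfolding first_split_def by auto
  have N_K: "f p \<in> prios K" if "p \<in> prios N" for p
    using that simulates_prios[OF sim] y first_split_prios[OF fs] by blast
  have "pgoal ?H'"
    using pgoal_body_parts[OF c] pgoal_subset[OF H K_H] layout by (intro pgoal_sq_resolvent) auto
  moreover have "\<exists>e'. (e', f p) \<in> ?H' \<and> subst_atom \<delta> e' = a" if ap: "(a, p) \<in> N" for a p
  proof -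
    obtain e' where e': "(e', f p) \<in> H" "subst_atom \<eta> e' = a"
      using N_H ap by blast
    then have "(e', f p) \<in> K"
      using in_K y ap in_prios by blast
    then show ?thesis
      using e' img_K[OF e'(1)] unfolding mem_sq_resolvent by blast
  qed
  moreover have "covered (shift_pg f N) (subst_atom \<delta> x) z"
    if xz: "(x, z) \<in> ?H'" "z \<notin> f ` prios N" for x z
  proof -
    consider (K) e' where "(e', z) \<in> K" "x = subst_atom \<theta> e'"
      | (stack) m s where "(m, s) \<in> ms c" "z = \<gamma> s" "x = subst_atom \<theta> (subst_atom \<xi> m)"
      | (queue) m s where "(m, s) \<in> mq c" "z = \<gamma> s" "x = subst_atom \<theta> (subst_atom \<xi> m)"
      using xz(1) unfolding mem_sq_resolvent by blast
    then show ?thesis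
    proof cases
      case K
      then show ?thesis
        using extra K_H img_K xz(2) by auto
    next
      case stack
      have "subst_atom \<delta> x = subst_atom \<zeta> m"
        using stack img_B body_split[OF c] by auto
      then show ?thesis
        using stack_covered[OF stack(1)] by simp
    next
      case queue
      obtain x0 where "covered (shift_pg f N) (subst_atom \<zeta> m) x0"
        using queue_covered[OF queue(1)] by auto
      moreover have "y' < z" if "(a', y') \<in> shift_pg f N" for a' y'
        using that N_K layout queue(1,2) in_prios unfolding sq_layout_def mem_shift_pg by blast
      ultimately have "covered (shift_pg f N) (subst_atom \<zeta> m) z"
        using covered_transfer by blast
      moreover have "subst_atom \<delta> x = subst_atom \<zeta> m"
        using queue img_B body_split[OF c] by auto
      ultimately show ?thesis by simp
    qed
  qed
  ultimately show ?thesis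
    using mono unfolding simulates_def by blast
qed

lemma clears_resolve_front:
  assumes H: "pgoal H" and fs: "first_split H e y K"
    and step: "(H, c, \<xi>, \<theta>, sq_resolvent \<theta> \<gamma> \<xi> (ms c) K (mq c)) \<in> SQ" and c: "c \<in> P"
    and fresh: "vars_clause (subst_clause \<xi> c) \<inter> V = {}" and layout: "sq_layout \<gamma> (ms c) K (mq c)"
    and img_K: "\<And>e' y'. (e', y') \<in> H \<Longrightarrow> subst_atom \<delta> (subst_atom \<theta> e') = subst_atom \<eta> e'"
    and rest: "clears N f (\<gamma> ` prios (ms c)) (V \<union> vars_clause (subst_clause \<xi> c))
      (sq_resolvent \<theta> \<gamma> \<xi> (ms c) K (mq c)) \<delta> Z V' H' \<eta>'"
  shows "clears N f {y} V H \<eta> (c # Z) V' H' \<eta>'"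
proof -
  let ?H1 = "sq_resolvent \<theta> \<gamma> \<xi> (ms c) K (mq c)" and ?S = "\<gamma> ` prios (ms c)"
  have new: "\<And>q. q \<in> prios H' \<Longrightarrow> q \<in> prios ?H1 - ?S \<or> (\<forall>r\<in>prios ?H1 - ?S. r < q)"
    and kept: "\<And>e y. (e, y) \<in> ?H1 \<Longrightarrow> y \<notin> ?S \<Longrightarrow> \<exists>e'. (e', y) \<in> H' \<and> subst_atom \<eta>' e' = subst_atom \<delta> e"
    using rest unfolding clears_def by blast+
  have K: "prios K = prios H - {y}"
    using fs by (rule first_split_prios)
  have S_K: "?S \<inter> prios K = {}" and S_Mq: "?S \<inter> \<gamma> ` prios (mq c) = {}"
    using layout unfolding sq_layout_def by fastforce+
  have rest_prios: "prios ?H1 - ?S = prios K \<union> \<gamma> ` prios (mq c)"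
    using S_K S_Mq unfolding prios_sq_resolvent by blast
  have "\<forall>q\<in>prios H'. q \<in> prios H - {y} \<or> (\<forall>r\<in>prios H - {y}. r < q)"
    using new layout unfolding rest_prios K[symmetric] sq_layout_def by blast
  moreover have "\<forall>e' y'. (e', y') \<in> H \<longrightarrow> y' \<notin> {y} \<longrightarrow>
    (\<exists>e''. (e'', y') \<in> H' \<and> subst_atom \<eta>' e'' = subst_atom \<eta> e')"
  proof (intro allI impI)
    fix e' y' assume e': "(e', y') \<in> H" "y' \<notin> {y}"
    have "(e', y') \<in> K"
      using fs e' unfolding first_split_def by auto
    then have "(subst_atom \<theta> e', y') \<in> ?H1" "y' \<notin> ?S"
      using S_K in_prios unfolding mem_sq_resolvent by blast+
    then show "\<exists>e''. (e'', y') \<in> H' \<and> subst_atom \<eta>' e'' = subst_atom \<eta> e'"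
      using kept img_K[OF e'(1)] by metis
  qed
  moreover have "sld_seg V H (c # Z) V' H'"
    using sld_seg_Cons[OF step c fresh] rest unfolding clears_def by blast
  moreover have "simulates N f H' \<eta>'" "finite V'" "vars_pg H' \<subseteq> V'"
    using rest unfolding clears_def by blast+
  ultimately show ?thesis
    unfolding clears_def by blast
qed

lemma clears_stack_part:
  assumes sim: "simulates N f (sq_resolvent \<theta> \<gamma> \<xi> (ms c) K (mq c)) \<delta>" and c: "c \<in> P"
    and layout: "sq_layout \<gamma> (ms c) K (mq c)" and f_K: "f ` prios N \<subseteq> prios K"
    and img_B: "\<And>m s. (m, s) \<in> snd c \<Longrightarrow> subst_atom \<delta> (subst_atom \<theta> (subst_atom \<xi> m)) = subst_atom \<zeta> m"
    and clearable: "\<forall>m\<in>ms c. front_clearable N f (subst_atom \<zeta> (fst m))"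
    and V: "finite V" "vars_pg (sq_resolvent \<theta> \<gamma> \<xi> (ms c) K (mq c)) \<subseteq> V"
  shows "\<exists>Z V' H' \<eta>'. clears N f (\<gamma> ` prios (ms c)) V (sq_resolvent \<theta> \<gamma> \<xi> (ms c) K (mq c)) \<delta> Z V' H' \<eta>'"
proof (rule clears_front_set)
  let ?H1 = "sq_resolvent \<theta> \<gamma> \<xi> (ms c) K (mq c)" and ?S = "\<gamma> ` prios (ms c)"
  show "finite ?S"
    using pgoal_body_parts[OF c] by (simp add: pgoal_def finite_prios)
  show "?S \<subseteq> prios ?H1"
    unfolding prios_sq_resolvent by blast
  show "\<forall>s\<in>?S. \<forall>r\<in>prios ?H1 - ?S. s < r"
    using layout unfolding prios_sq_resolvent sq_layout_def by blast
  show "?S \<inter> f ` prios N = {}"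
    using layout f_K unfolding sq_layout_def by fastforce
  show "\<forall>s\<in>?S. \<exists>e. (e, s) \<in> ?H1 \<and> front_clearable N f (subst_atom \<delta> e)"
  proof
    fix s assume "s \<in> ?S"
    then obtain m s0 where m: "(m, s0) \<in> ms c" "s = \<gamma> s0"
      by (auto elim: in_priosE)
    then have "(subst_atom \<theta> (subst_atom \<xi> m), s) \<in> ?H1"
      unfolding mem_sq_resolvent by blast
    moreover have "subst_atom \<delta> (subst_atom \<theta> (subst_atom \<xi> m)) = subst_atom \<zeta> m"
      using img_B m(1) body_split[OF c] by blast
    ultimately show "\<exists>e. (e, s) \<in> ?H1 \<and> front_clearable N f (subst_atom \<delta> e)"
      using clearable m(1) by fastforce
  qed
qed (use sim V in auto)

text \<open>Induction on the covering: the front atom is resolved with the clause of its covering,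
  whose stack part becomes the new front and is cleared recursively, while the queue part goes
  behind the whole goal.\<close>

lemma front_clearable_if_covered:
  assumes "covered (shift_pg f N) A x" and "\<forall>q\<in>prios N. x \<le> f q"
  shows "front_clearable N f A"
  using assms
proof (induction rule: covered.induct)
  case (covered_occurs A y x)
  then show ?case
    by (auto simp: mem_shift_pg dest!: in_prios)
next
  case (covered_clause c A \<zeta> x)
  have vacuous: "\<And>a y. (a, y) \<in> shift_pg f N \<Longrightarrow> y < x \<Longrightarrow> y < z" for z
    using covered_clause.prems by (auto simp: mem_shift_pg dest!: in_prios)
  have stack_clearable: "\<forall>m\<in>ms c. front_clearable N f (subst_atom \<zeta> (fst m))"
    using covered_clause.IH(1) covered_clause.prems by blast
  show ?case
    unfolding front_clearable_def
  proof (intro allI impI)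
    fix V H \<eta> e y
    assume sim: "simulates N f H \<eta>" and V: "finite V" "vars_pg H \<subseteq> V"
      and ey: "(e, y) \<in> H" and y: "y \<notin> f ` prios N" and y_min: "\<forall>q\<in>prios H. y \<le> q"
      and A: "subst_atom \<eta> e = A"
    have H: "pgoal H"
      using sim unfolding simulates_def by blast
    define K where "K = H - {(e, y)}"
    have fs: "first_split H e y K"
      unfolding K_def using H ey y_min by (rule first_split_remove)
    obtain \<xi> \<theta> \<gamma> \<delta> where step: "(H, c, \<xi>, \<theta>, sq_resolvent \<theta> \<gamma> \<xi> (ms c) K (mq c)) \<in> SQ"
      and fresh: "vars_clause (subst_clause \<xi> c) \<inter> V = {}" "finite (vars_clause (subst_clause \<xi> c))"
      and layout: "sq_layout \<gamma> (ms c) K (mq c)"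
      and vars: "vars_pg (sq_resolvent \<theta> \<gamma> \<xi> (ms c) K (mq c)) \<subseteq> V \<union> vars_clause (subst_clause \<xi> c)"
      and img_K: "\<And>e' y'. (e', y') \<in> H \<Longrightarrow> subst_atom \<delta> (subst_atom \<theta> e') = subst_atom \<eta> e'"
      and img_B: "\<And>m s. (m, s) \<in> snd c \<Longrightarrow> subst_atom \<delta> (subst_atom \<theta> (subst_atom \<xi> m)) = subst_atom \<zeta> m"
      using sq_step_lifting[OF covered_clause.hyps(1) H fs V] A covered_clause.hyps(2) by metis
    let ?H1 = "sq_resolvent \<theta> \<gamma> \<xi> (ms c) K (mq c)" and ?S = "\<gamma> ` prios (ms c)"
    have sim1: "simulates N f ?H1 \<delta>"
    proof (rule simulates_resolve_extra[OF sim fs y covered_clause.hyps(1) layout img_K img_B])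
      show "covered (shift_pg f N) (subst_atom \<zeta> (fst m)) z" if "m \<in> ms c" for m z
        using covered_clause.IH(1) that vacuous covered_transfer by blast
      show "\<exists>x. covered (shift_pg f N) (subst_atom \<zeta> (fst m)) x" if "m \<in> mq c" for m
        using covered_clause.IH(2) that by blast
    qed
    have f_K: "f ` prios N \<subseteq> prios K"
      using simulates_prios[OF sim] y first_split_prios[OF fs] by blast
    have fin: "finite (V \<union> vars_clause (subst_clause \<xi> c))"
      using V(1) fresh(2) by simp
    have "\<exists>Z V' H' \<eta>'. clears N f ?S (V \<union> vars_clause (subst_clause \<xi> c)) ?H1 \<delta> Z V' H' \<eta>'"
      by (rule clears_stack_part[OF sim1 covered_clause.hyps(1) layout f_K _ stack_clearable fin vars])
        (erule img_B)
    then obtain Z V' H' \<eta>' where rest: "clears N f ?S (V \<union> vars_clause (subst_clause \<xi> c)) ?H1 \<delta> Z V' H' \<eta>'"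
      by blast
    have "clears N f {y} V H \<eta> (c # Z) V' H' \<eta>'"
      by (rule clears_resolve_front[OF H fs step covered_clause.hyps(1) fresh(1) layout _ rest]) (erule img_K)
    then show "\<exists>Z V' H' \<eta>'. clears N f {y} V H \<eta> Z V' H' \<eta>'"
      by blast
  qed
qed

lemma clear_front_below:
  assumes sim: "simulates N f H \<eta>" and V: "finite V" "vars_pg H \<subseteq> V"
    and b: "\<forall>q\<in>prios N. b \<le> f q" "b \<in> prios H"
  obtains Z V' H' \<eta>' where "sld_seg V H Z V' H'" "simulates N f H' \<eta>'" "finite V'" "vars_pg H' \<subseteq> V'"
    "\<forall>q\<in>prios H'. b \<le> q"
proof -
  let ?S = "{q \<in> prios H. q < b}"
  have H: "pgoal H" and extra: "\<And>e y. (e, y) \<in> H \<Longrightarrow> y \<notin> f ` prios N \<Longrightarrow>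
      covered (shift_pg f N) (subst_atom \<eta> e) y"
    using sim unfolding simulates_def by auto
  have "\<exists>Z V' H' \<eta>'. clears N f ?S V H \<eta> Z V' H' \<eta>'"
  proof (rule clears_front_set)
    show "finite ?S"
      using H unfolding pgoal_def by (simp add: finite_prios)
    show "?S \<inter> f ` prios N = {}"
      using b(1) by fastforce
    show "\<forall>s\<in>?S. \<exists>e. (e, s) \<in> H \<and> front_clearable N f (subst_atom \<eta> e)"
    proof
      fix s assume s: "s \<in> ?S"
      then obtain e where "(e, s) \<in> H"
        by (auto elim: in_priosE)
      moreover have "s \<notin> f ` prios N" "\<forall>q\<in>prios N. s \<le> f q"
        using s b(1) by fastforce+
      ultimately show "\<exists>e. (e, s) \<in> H \<and> front_clearable N f (subst_atom \<eta> e)"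
        using extra front_clearable_if_covered by blast
    qed
  qed (use sim V in auto)
  then obtain Z V' H' \<eta>' where "clears N f ?S V H \<eta> Z V' H' \<eta>'"
    by blast
  then have "sld_seg V H Z V' H'" "simulates N f H' \<eta>'" "finite V'" "vars_pg H' \<subseteq> V'"
    and new: "\<forall>q\<in>prios H'. q \<in> prios H - ?S \<or> (\<forall>r\<in>prios H - ?S. r < q)"
    unfolding clears_def by blast+
  moreover have "b \<le> q" if "q \<in> prios H'" for q
  proof -
    have "q \<in> prios H - ?S \<or> (\<forall>r\<in>prios H - ?S. r < q)"
      using new that by blast
    then show ?thesis
    proof
      assume "\<forall>r\<in>prios H - ?S. r < q"
      moreover have "b \<in> prios H - ?S"
        using b(2) by simp
      ultimately show ?thesis
        by (blast intro: less_imp_le)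
    qed auto
  qed
  ultimately show ?thesis
    using that by blast
qed

section \<open>Simulating p-RSLD steps\<close>

lemma covered_after_step:
  assumes fsN: "first_split N a p KN" and c: "c \<in> P"
    and head: "subst_atom \<theta> a = subst_atom \<theta> (subst_atom \<xi> (fst c))"
    and G': "G' = sq_resolvent \<theta> \<gamma> \<xi> (ms c) KN (mq c)"
    and f'_KN: "\<And>q. q \<in> prios KN \<Longrightarrow> f' q = f q"
    and stack_below: "\<And>s. s \<in> prios (ms c) \<Longrightarrow> f' (\<gamma> s) < z"
    and "covered (shift_pg f N) B z"
  shows "covered (shift_pg f' G') (subst_atom \<theta> B) z"
  using assms(7)
proof (rule covered_subst[OF _ order_refl])
  fix a1 y x assume a1: "(a1, y) \<in> shift_pg f N" "y < x" "z \<le> x"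
  then obtain q where q: "(a1, q) \<in> N" "y = f q"
    by (auto simp: mem_shift_pg)
  show "covered (shift_pg f' G') (subst_atom \<theta> a1) x"
  proof (cases "(a1, q) \<in> KN")
    case True
    then have "(subst_atom \<theta> a1, f' q) \<in> shift_pg f' G'"
      unfolding G' mem_shift_pg mem_sq_resolvent by blast
    moreover have "f' q = y"
      using True q(2) f'_KN in_prios by blast
    ultimately show ?thesis
      using a1(2) by (auto intro: covered_occurs)
  next
    case False
    then have "a1 = a"
      using q(1) fsN unfolding first_split_def by auto
    let ?\<zeta> = "\<lambda>v. subst_trm \<theta> (\<xi> v)"
    have in_G': "(subst_atom ?\<zeta> m, f' (\<gamma> s)) \<in> shift_pg f' G'"
      if "(m, s) \<in> ms c \<or> (m, s) \<in> mq c" for m s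
      using that unfolding G' mem_shift_pg mem_sq_resolvent subst_atom_comp by blast
    have "f' (\<gamma> s) < x" if "(m, s) \<in> ms c" for m s
      using stack_below[OF in_prios[OF that]] a1(3) by simp
    then have "covered (shift_pg f' G') (subst_atom ?\<zeta> (fst c)) x"
      using in_G' by (intro covered_head[OF c]) fastforce+
    then show ?thesis
      using head \<open>a1 = a\<close> by (simp add: subst_atom_comp)
  qed
qed

lemma simulates_rest_prios:
  assumes sim: "simulates N f H \<eta>" and fsN: "first_split N a p KN" and fsH: "first_split H e (f p) KH"
  shows "f ` prios KN \<subseteq> prios KH"
proof
  fix z assume "z \<in> f ` prios KN"
  then obtain q where q: "q \<in> prios KN" "z = f q" by blast
  have "q \<in> prios N" "p \<in> prios N" "p < q"
    using q(1) first_split_prios[OF fsN] first_split_less[OF fsN] in_prios[OF first_split_mem[OF fsN]]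
    by auto
  then have "f p < f q"
    using sim strict_mono_onD unfolding simulates_def by blast
  then show "z \<in> prios KH"
    using q \<open>q \<in> prios N\<close> simulates_prios[OF sim] first_split_prios[OF fsH] by auto
qed

lemma resolvent_atoms_simulated:
  assumes c: "c \<in> P"
    and K_atoms: "\<And>b q. (b, q) \<in> K \<Longrightarrow>
      \<exists>e. (e, f q) \<in> K' \<and> subst_atom \<delta> (subst_atom \<theta>' e) = subst_atom \<theta> b"
    and f'_K: "\<And>q. q \<in> prios K \<Longrightarrow> f' q = f q"
    and f'_body: "\<And>s. s \<in> prios (ms c) \<union> prios (mq c) \<Longrightarrow> f' (\<gamma> s) = \<gamma>' s"
    and img_B: "\<And>m s. (m, s) \<in> snd c \<Longrightarrow>
      subst_atom \<delta> (subst_atom \<theta>' (subst_atom \<xi>' m)) = subst_atom \<theta> (subst_atom \<xi> m)"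
    and bq: "(b, q) \<in> sq_resolvent \<theta> \<gamma> \<xi> (ms c) K (mq c)"
  shows "\<exists>e'. (e', f' q) \<in> sq_resolvent \<theta>' \<gamma>' \<xi>' (ms c) K' (mq c) \<and> subst_atom \<delta> e' = b"
proof -
  consider (K) b0 where "(b0, q) \<in> K" "b = subst_atom \<theta> b0"
    | (body) m s where "(m, s) \<in> ms c \<or> (m, s) \<in> mq c" "q = \<gamma> s" "b = subst_atom \<theta> (subst_atom \<xi> m)"
    using bq unfolding mem_sq_resolvent by blast
  then show ?thesis
  proof cases
    case K
    then obtain e where "(e, f q) \<in> K'" "subst_atom \<delta> (subst_atom \<theta>' e) = b"
      using K_atoms by blast
    moreover have "f' q = f q"
      using K(1) f'_K in_prios by blast
    ultimately show ?thesis
      unfolding mem_sq_resolvent by auto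
  next
    case body
    then have "(subst_atom \<theta>' (subst_atom \<xi>' m), \<gamma>' s) \<in> sq_resolvent \<theta>' \<gamma>' \<xi>' (ms c) K' (mq c)"
      unfolding mem_sq_resolvent by blast
    moreover have "f' q = \<gamma>' s"
      using body f'_body in_prios by blast
    moreover have "(m, s) \<in> snd c"
      using body(1) body_split[OF c] by blast
    ultimately show ?thesis
      using body img_B by metis
  qed
qed

lemma simulates_resolvent:
  assumes sim: "simulates N f H \<eta>" and fsN: "first_split N a p KN" and fsH: "first_split H e (f p) KH"
    and c: "c \<in> P" and head: "subst_atom \<theta> a = subst_atom \<theta> (subst_atom \<xi> (fst c))"
    and layout: "sq_layout \<gamma> (ms c) KN (mq c)" and layout': "sq_layout \<gamma>' (ms c) KH (mq c)"
    and img_K: "\<And>e' y'. (e', y') \<in> H \<Longrightarrow> subst_atom \<delta> (subst_atom \<theta>' e') = subst_atom \<theta> (subst_atom \<eta> e')"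
    and img_B: "\<And>m s. (m, s) \<in> snd c \<Longrightarrow>
      subst_atom \<delta> (subst_atom \<theta>' (subst_atom \<xi>' m)) = subst_atom \<theta> (subst_atom \<xi> m)"
  shows "\<exists>f'. simulates (sq_resolvent \<theta> \<gamma> \<xi> (ms c) KN (mq c)) f' (sq_resolvent \<theta>' \<gamma>' \<xi>' (ms c) KH (mq c)) \<delta>"
proof -
  let ?G' = "sq_resolvent \<theta> \<gamma> \<xi> (ms c) KN (mq c)" and ?H' = "sq_resolvent \<theta>' \<gamma>' \<xi>' (ms c) KH (mq c)"
  have H: "pgoal H" and mono: "strict_mono_on (prios N) f"
    and N_H: "\<And>a p. (a, p) \<in> N \<Longrightarrow> \<exists>e. (e, f p) \<in> H \<and> subst_atom \<eta> e = a"
    and extra: "\<And>e y. (e, y) \<in> H \<Longrightarrow> y \<notin> f ` prios N \<Longrightarrow> covered (shift_pg f N) (subst_atom \<eta> e) y"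
    using sim unfolding simulates_def by auto
  have KN_N: "KN \<subseteq> N"
    using fsN by (rule first_split_subset)
  have f_KN: "f ` prios KN \<subseteq> prios KH"
    using sim fsN fsH by (rule simulates_rest_prios)
  define f' where "f' = (\<lambda>q. if q \<in> prios KN then f q else \<gamma>' (inv \<gamma> q))"
  have mono_KN: "strict_mono_on (prios KN) f"
    using mono prios_mono[OF KN_N] by (rule monotone_on_subset)
  have mono': "strict_mono_on (prios ?G') f'"
    and f'_body: "\<And>s. s \<in> prios (ms c) \<union> prios (mq c) \<Longrightarrow> f' (\<gamma> s) = \<gamma>' s"
    using strict_mono_on_resolvent[OF layout layout' mono_KN f_KN] unfolding prios_sq_resolvent f'_def by blast+
  have f'_KN: "f' q = f q" if "q \<in> prios KN" for q
    using that unfolding f'_def by simp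
  have K_atoms: "\<exists>e'. (e', f q) \<in> KH \<and> subst_atom \<delta> (subst_atom \<theta>' e') = subst_atom \<theta> b0"
    if b0q: "(b0, q) \<in> KN" for b0 q
  proof -
    obtain e0 where e0: "(e0, f q) \<in> H" "subst_atom \<eta> e0 = b0"
      using N_H b0q KN_N by blast
    have "f q \<in> prios KH"
      using f_KN b0q in_prios by blast
    then have "(e0, f q) \<in> KH"
      using e0(1) fsH unfolding first_split_def by (auto dest: in_prios)
    then show ?thesis
      using e0 img_K[OF e0(1)] by blast
  qed
  have "pgoal ?H'"
    using pgoal_body_parts[OF c] pgoal_subset[OF H first_split_subset[OF fsH]] layout'
    by (intro pgoal_sq_resolvent) auto
  moreover have "\<exists>e'. (e', f' q) \<in> ?H' \<and> subst_atom \<delta> e' = b" if "(b, q) \<in> ?G'" for b q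
    by (rule resolvent_atoms_simulated[OF c _ _ _ _ that]) (fact K_atoms f'_KN f'_body img_B)+
  moreover have "covered (shift_pg f' ?G') (subst_atom \<delta> x) z"
    if xz: "(x, z) \<in> ?H'" "z \<notin> f' ` prios ?G'" for x z
  proof -
    have "z \<noteq> \<gamma>' s" if "(m, s) \<in> ms c \<or> (m, s) \<in> mq c" for m s
      using xz(2) f'_body[of s] that in_prios unfolding prios_sq_resolvent by (metis UnCI image_eqI)
    then obtain e0 where e0: "(e0, z) \<in> KH" "x = subst_atom \<theta>' e0"
      using xz(1) unfolding mem_sq_resolvent by blast
    then have e0_H: "(e0, z) \<in> H" and z_KH: "z \<in> prios KH"
      using first_split_subset[OF fsH] in_prios by blast+
    have "z \<notin> f ` prios N"
    proof
      assume "z \<in> f ` prios N"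
      then obtain q where q: "q \<in> prios N" "z = f q" by blast
      have "q \<noteq> p"
        using q z_KH first_split_prios[OF fsH] by auto
      then have "z = f' q" "q \<in> prios ?G'"
        using q first_split_prios[OF fsN] f'_KN unfolding prios_sq_resolvent by auto
      then show False
        using xz(2) by blast
    qed
    then have cov: "covered (shift_pg f N) (subst_atom \<eta> e0) z"
      using extra e0_H by blast
    have stack_below: "f' (\<gamma> s) < z" if "s \<in> prios (ms c)" for s
      using that f'_body[of s] layout' z_KH unfolding sq_layout_def by auto
    have "covered (shift_pg f' ?G') (subst_atom \<theta> (subst_atom \<eta> e0)) z"
      by (rule covered_after_step[OF fsN c head refl _ _ cov]) (use f'_KN stack_below in auto)
    then show ?thesis
      using e0(2) img_K[OF e0_H] by simp
  qed
  ultimately show ?thesis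
    using mono' unfolding simulates_def by blast
qed

lemma simulates_step:
  assumes sim: "simulates N f H \<eta>" and V: "finite V" "vars_pg H \<subseteq> V"
    and fsN: "first_split N a p KN" and front: "\<forall>q\<in>prios H. f p \<le> q"
    and c: "c \<in> P" and step: "(N, c, \<xi>, \<theta>, G') \<in> SQ"
  obtains \<xi>' \<theta>' H' f' \<delta> where "(H, c, \<xi>', \<theta>', H') \<in> SQ"
    "vars_clause (subst_clause \<xi>' c) \<inter> V = {}" "finite (vars_clause (subst_clause \<xi>' c))"
    "vars_pg H' \<subseteq> V \<union> vars_clause (subst_clause \<xi>' c)" "simulates G' f' H' \<delta>"
proof -
  have H: "pgoal H"
    using sim unfolding simulates_def by blast
  obtain e where e: "(e, f p) \<in> H" "subst_atom \<eta> e = a"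
    using sim first_split_mem[OF fsN] unfolding simulates_def by blast
  define KH where "KH = H - {(e, f p)}"
  have fsH: "first_split H e (f p) KH"
    unfolding KH_def using H e(1) front by (rule first_split_remove)
  have "is_step (N, c, \<xi>, \<theta>, G')"
    using complete step unfolding complete_steps_def by blast
  then obtain a0 p0 F0 where "first_split N a0 p0 F0" "is_mgu \<theta> a0 (subst_atom \<xi> (fst c))"
    unfolding is_step.simps pstep_def by blast
  then have head: "subst_atom \<theta> a = subst_atom \<theta> (subst_atom \<xi> (fst c))"
    using first_split_unique[OF fsN] unfolding is_mgu_def unifier_def by blast
  obtain \<gamma> where layout: "sq_layout \<gamma> (ms c) KN (mq c)"
    and G': "G' = sq_resolvent \<theta> \<gamma> \<xi> (ms c) KN (mq c)"
    using sq_split_step[OF split program_valid_clause[OF c] step fsN] by blast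
  have "subst_atom (\<lambda>v. subst_trm \<theta> (\<eta> v)) e = subst_atom (\<lambda>v. subst_trm \<theta> (\<xi> v)) (fst c)"
    using e(2) head by (simp add: subst_atom_comp[symmetric])
  then obtain \<xi>' \<theta>' \<gamma>' \<delta> where step': "(H, c, \<xi>', \<theta>', sq_resolvent \<theta>' \<gamma>' \<xi>' (ms c) KH (mq c)) \<in> SQ"
    and fresh: "vars_clause (subst_clause \<xi>' c) \<inter> V = {}" "finite (vars_clause (subst_clause \<xi>' c))"
    and layout': "sq_layout \<gamma>' (ms c) KH (mq c)"
    and vars: "vars_pg (sq_resolvent \<theta>' \<gamma>' \<xi>' (ms c) KH (mq c)) \<subseteq> V \<union> vars_clause (subst_clause \<xi>' c)"
    and img_K: "\<And>e' y'. (e', y') \<in> H \<Longrightarrow>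
      subst_atom \<delta> (subst_atom \<theta>' e') = subst_atom (\<lambda>v. subst_trm \<theta> (\<eta> v)) e'"
    and img_B: "\<And>m s. (m, s) \<in> snd c \<Longrightarrow>
      subst_atom \<delta> (subst_atom \<theta>' (subst_atom \<xi>' m)) = subst_atom (\<lambda>v. subst_trm \<theta> (\<xi> v)) m"
    by (rule sq_step_lifting[OF c H fsH V]) blast+
  have "\<exists>f'. simulates G' f' (sq_resolvent \<theta>' \<gamma>' \<xi>' (ms c) KH (mq c)) \<delta>"
    unfolding G' using sim fsN fsH c head layout layout'
  proof (rule simulates_resolvent)
    show "subst_atom \<delta> (subst_atom \<theta>' e') = subst_atom \<theta> (subst_atom \<eta> e')" if "(e', y') \<in> H" for e' y'
      using img_K[OF that] by (simp add: subst_atom_comp)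
    show "subst_atom \<delta> (subst_atom \<theta>' (subst_atom \<xi>' m)) = subst_atom \<theta> (subst_atom \<xi> m)"
      if "(m, s) \<in> snd c" for m s
      using img_B[OF that] by (simp add: subst_atom_comp)
  qed
  then show ?thesis
    using that step' fresh vars by blast
qed

lemma rsld_prefix_simulated:
  assumes G: "pgoal G" and G0: "Gs 0 = G"
    and red: "\<forall>j\<le>n. reduced (Xs j) (\<alpha> j) (Gs j) (Ns j)"
    and steps: "\<forall>j<n. cls j \<in> P \<and> (Ns j, cls j, \<xi>s j, \<theta>s j, Gs (Suc j)) \<in> SQ"
  shows "j \<le> n \<Longrightarrow> \<exists>Z V H \<eta> f. sld_seg (vars_pg G) G Z V H \<and> subseq (map cls [0..<j]) Z \<and>
           simulates (Ns j) f H \<eta> \<and> finite V \<and> vars_pg H \<subseteq> V"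
proof (induction j)
  case 0
  have "simulates (Ns 0) id G (\<lambda>x. subst_trm (\<alpha> 0) (Var x))"
    using simulates_reduced[OF simulates_refl[OF G]] red G0 by auto
  moreover have "finite (vars_pg G)"
    using G unfolding pgoal_def by (simp add: finite_vars_pg)
  ultimately show ?case
    by (intro exI[of _ "[]"] exI[of _ "vars_pg G"] exI[of _ G]) (auto intro: sld_seg_Nil)
next
  case (Suc j)
  then obtain Z V H \<eta> f where seg: "sld_seg (vars_pg G) G Z V H" "subseq (map cls [0..<j]) Z"
    and sim: "simulates (Ns j) f H \<eta>" "finite V" "vars_pg H \<subseteq> V"
    by auto
  have c: "cls j \<in> P" and step: "(Ns j, cls j, \<xi>s j, \<theta>s j, Gs (Suc j)) \<in> SQ"
    using steps Suc.prems by auto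
  then have "is_step (Ns j, cls j, \<xi>s j, \<theta>s j, Gs (Suc j))"
    using complete unfolding complete_steps_def by blast
  then obtain a p K where fs: "first_split (Ns j) a p K"
    unfolding is_step.simps pstep_def by blast
  have "\<forall>q\<in>prios (Ns j). f p \<le> f q"
    using sim(1) fs strict_mono_on_leD unfolding simulates_def first_split_def by fastforce
  moreover have "f p \<in> prios H"
    using simulates_prios[OF sim(1)] first_split_mem[OF fs] in_prios by blast
  ultimately obtain Z1 V1 H1 \<eta>1 where seg1: "sld_seg V H Z1 V1 H1"
    and sim1: "simulates (Ns j) f H1 \<eta>1" "finite V1" "vars_pg H1 \<subseteq> V1"
    and front: "\<forall>q\<in>prios H1. f p \<le> q"
    using clear_front_below[OF sim] by blast
  obtain \<xi>' \<theta>' H2 f2 \<eta>2 where step': "(H1, cls j, \<xi>', \<theta>', H2) \<in> SQ"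
    and fresh: "vars_clause (subst_clause \<xi>' (cls j)) \<inter> V1 = {}"
      "finite (vars_clause (subst_clause \<xi>' (cls j)))"
    and vars: "vars_pg H2 \<subseteq> V1 \<union> vars_clause (subst_clause \<xi>' (cls j))"
    and sim2: "simulates (Gs (Suc j)) f2 H2 \<eta>2"
    by (rule simulates_step[OF sim1 fs front c step]) blast+
  have "simulates (Ns (Suc j)) f2 H2 (\<lambda>x. subst_trm (\<alpha> (Suc j)) (\<eta>2 x))"
    using simulates_reduced[OF sim2] red Suc.prems by blast
  moreover have "sld_seg (vars_pg G) G (Z @ Z1 @ [cls j]) (V1 \<union> vars_clause (subst_clause \<xi>' (cls j))) H2"
    using seg(1) seg1 sld_seg_single[OF step' c fresh(1)] by (blast intro: sld_seg_append)
  moreover have "subseq (map cls [0..<Suc j]) (Z @ Z1 @ [cls j])"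
    using seg(2) by (simp add: list_emb_append2 list_emb_append_mono)
  ultimately show ?case
    using sim1(2) fresh(2) vars by blast
qed

end

theorem lemmaL5p1p1:
  fixes P :: "('f,'v) clause set" and SQ :: "('f,'v) step set"
    and G Q :: "('f,'v) pgoal" and X :: "('f,'v) clause list"
  assumes "infinite (UNIV :: 'v set)"
    and "program P"
    and "stack_queue SQ"
    and "pgoal G"
    and "rsld_deriv SQ P G X Q"
  shows "\<exists>Z R. sld_deriv SQ P G Z R \<and> subseq X Z \<and> card Q \<le> card R"
proof -
  obtain ms mq where "sq_split SQ ms mq"
    using stack_queue_imp_sq_split[OF assms(3)] by blast
  with assms(1-3) interpret sq_derivations SQ P ms mq
    unfolding stack_queue_def by unfold_locales blast+
  obtain n Gs Ns \<alpha> cls \<xi>s \<theta>s where R: "Gs 0 = G" "Ns n = Q" "X = map cls [0..<n]"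
    "\<forall>j\<le>n. reduced (vars_pg (apply_substs G (map \<theta>s [0..<j]))) (\<alpha> j) (Gs j) (Ns j)"
    "\<forall>j<n. cls j \<in> P \<and> is_step (Ns j, cls j, \<xi>s j, \<theta>s j, Gs (Suc j)) \<and>
       (Ns j, cls j, \<xi>s j, \<theta>s j, Gs (Suc j)) \<in> SQ \<and>
       vars_clause (subst_clause (\<xi>s j) (cls j)) \<inter>
         (vars_pg G \<union> (\<Union>i<j. vars_clause (subst_clause (\<xi>s i) (cls i)))) = {}"
    using assms(5) unfolding rsld_deriv_def by (elim exE conjE) (rule that; assumption)
  have "\<forall>j<n. cls j \<in> P \<and> (Ns j, cls j, \<xi>s j, \<theta>s j, Gs (Suc j)) \<in> SQ"
    using R(5) by blast
  from rsld_prefix_simulated[OF assms(4) R(1,4) this order_refl]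
  obtain Z V R \<eta> f where seg: "sld_seg (vars_pg G) G Z V R" and "subseq X Z" "simulates Q f R \<eta>"
    unfolding R(2,3) by blast
  moreover have "sld_deriv SQ P G Z R"
    unfolding sld_deriv_def using sld_seg_imp_sld_deriv[OF seg] by blast
  ultimately show ?thesis
    using card_le_if_simulates by blast
qed

end
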